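(* Let $\mathcal{R}$ be a cyclic proof system induced by a trace interpretation $\iota\colon\mathcal{R}\to\mathcal{T}_\mathcal{A}$ for a (finite) activation algebra $\mathcal{A}$. Then $\mathit{strip}\colon\mathrm{R}(\mathcal{R})\to\mathcal{R}$ is a proof morphism; in particular, if $\Pi$ is a proof of $\Gamma;(\Theta,\sigma)$ in $\mathrm{R}(\mathcal{R})$, then $\mathit{strip}(\Pi)$ is a proof of $\Gamma$ in $\mathcal{R}$.
   Context: An activation algebra $\mathcal{A}=(A,\le,\vee,0,\alpha)$ is a finite join-semilattice with least element $0$ and distinguished $\alpha\neq0$; $\mathcal{T}_\mathcal{A}$ has finite sets as objects, relations $R\subseteq X\times A\times Y$ as morphisms $X\to Y$, composition $R'\circ R=\{(x,c,z)\mid\exists y,a,b:(x,a,y)\in R,(y,b,z)\in R',a\vee b=c\}$, identities $\{(x,0,x)\}$. A composable sequence $(\tau_i)$ satisfies the trace condition if there are $k_0<k_1<\cdots$ and $s_i\in\mathrm{dom}(\tau_{k_i})$ with $(s_i,\alpha,s_{i+1})\in\tau_{k_{i+1}-1}\circ\cdots\circ\tau_{k_i}$ for all $i$. Cyclic trees: a tree is a nonempty prefix-closed $T\subseteq\omega^*$ ($\le$ prefix order, $\mathrm{Chld}(t)=\{ti\in T\}$). A cyclic tree $(T,\beta)$: finite tree and partial map $\beta$ from leaves to inner nodes with $\beta(t)<t$; $t\in\mathrm{dom}(\beta)$ are buds, $\beta(t)$ companions. A branch is $\pi\in T^\omega$ with $\pi_0=\varepsilon$, $\pi_{i+1}\in\mathrm{Chld}(\pi_i)$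 if $\pi_i$ is not a leaf, and $\pi_i$ a bud with $\pi_{i+1}=\beta(\pi_i)$ if $\pi_i$ is a leaf. Derivation systems: a set $\textsc{Seq}$ of sequents, a set of rules, each rule $R$ having a conclusion and premises $(\Gamma,\Delta_1,\dots,\Delta_n)$. A preproof is $(C,\lambda,\delta)$ with $C=(T,\beta)$ a cyclic tree, $\lambda\colon T\to\textsc{Seq}$ with $\lambda(t)=\lambda(\beta(t))$ for buds, and partial $\delta$ from non-bud nodes to rules such that each non-bud $t$ is either an open leaf (not in $\mathrm{dom}(\delta)$) or $\delta(t)$ has conclusion $\lambda(t)$ and premises $\lambda(t1),\dots,\lambda(tn)$ where $\mathrm{Chld}(t)=\{t1,\dots,tn\}$. A cyclic proof system is a derivation system with a designated set of assumption-free preproofs (proofs). A trace interpretation $\iota\colon\mathcal{R}\to\mathcal{T}_\mathcal{A}$ assigns each sequent an object $\iota(\Gamma)$ and each rule $R$ with conclusion $\Gamma$ and premises $\Delta_i$ morphisms $r_i\colon\iota(\Gamma)\to\iota(\Delta_i)$; the induced cyclic proof system $\iota(\mathcal{R})$ takes as proofs the assumption-free preproofs such that along every branch $\pi$ the sequence of morphisms ($\delta(\pi_i)_j$ when $\pi_{i+1}=\pi_ij$, identity when $\pi_{i+1}=\beta(\pi_i)$) satisfies the trace condition. A preproof morphism $f\colon\mathcal{R}\to\mathcal{R}'$ maps sequents to sequents and each $\mathcal{R}$-rule with conclusion $\Gamma$ and premises $\Delta_i$ to an $\mathcal{R}'$-preproof with endsequent $f(\Gamma)$ and open leaves $f(\Delta_1),\dots,f(\Delta_n)$;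 it translates an $\mathcal{R}$-preproof $\Pi$ to the $\mathcal{R}'$-preproof $f(\Pi)$ obtained by replacing each rule application by its assigned preproof (composing at open leaves) and keeping bud–companion links. It is a proof morphism if $f(\Pi)$ is a proof whenever $\Pi$ is. Safra boards: with a fixed countable chip set $\mathcal{C}\supseteq\omega$, a Safra board on finite $X$ is $(\Theta,\sigma)$, $\Theta\subseteq\mathcal{C}$ finite linearly ordered (control), $\sigma\colon X\times A\to\mathcal{P}(\mathcal{P}(\Theta))$ with every chip in some stack; $\gamma$ covered iff it is the maximum of no stack. Transitions: $r$-successor for $r\colon X\to Y$ (move stacks: $\sigma^*(y,a)=\{S\in\sigma(x,b)\mid(x,c,y)\in r,\ a=b\vee c\}$; then for every $y$ with $\sigma^*(y,\alpha)\ne\emptyset$ add a fresh chip $\iota(y)\notin\Theta$ (distinct for distinct $y$, ordered above all old chips) on top of every stack in $\sigma^*(y,\alpha)$ and move these stacks to $(y,0)$, leaving $(y,\alpha)$ empty; control = old chips still occurring followed by the new chips); weakening (remove some stacks); population (add the empty stack to some positions $(x,0)$); $\gamma$-reset for covered $\gamma$ (replace every stack $S\ni\gamma$ by $\{z\in S\mid z\le\gamma\}$); in each case the new control consists of the chips still occurring, in the inherited order. Reset proof system $\mathrm{R}(\mathcal{R})$: sequents $\Gamma;(\Theta,\sigma)$ with $\Gamma\in\textsc{Seq}$ and $(\Theta,\sigma)$ a board on $\iota(\Gamma)$. Rules: structural rules Weak, $\textsc{Reset}_\gamma$, Pop with conclusion $\Gamma;(\Theta,\sigma)$ and one premise $\Gamma;(\Theta',\sigma')$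 where $(\Theta',\sigma')$ arises by weakening, $\gamma$-reset, or population; and for every $\mathcal{R}$-rule $R$ (conclusion $\Gamma$, premises $\Delta_i$, maps $r_i$) and board $(\Theta,\sigma)$ on $\iota(\Gamma)$, a rule with conclusion $\Gamma;(\Theta,\sigma)$ and premises $\Delta_i;(\Theta_i,\sigma_i)$, $(\Theta_i,\sigma_i)$ an $r_i$-successor of $(\Theta,\sigma)$. For a bud $t$, let $\Theta$ be the longest common prefix of the controls on the path from $\beta(t)$ to $t$; an invariant is a nonempty prefix $\theta$ of $\Theta$ such that $\textsc{Reset}_{\max(\theta)}$ is applied on that path. An assumption-free $\mathrm{R}(\mathcal{R})$-preproof is a proof iff every bud's path has an invariant. The preproof morphism $\mathit{strip}\colon\mathrm{R}(\mathcal{R})\to\mathcal{R}$ maps $\Gamma;(\Theta,\sigma)\mapsto\Gamma$, maps each structural rule to the one-node preproof of $\Gamma$ (open leaf), and maps each annotated copy of an $\mathcal{R}$-rule $R$ to the one-step preproof applying $R$. Thus $\mathit{strip}(\Pi)$ erases annotations and contracts structural-rule steps. *)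

theory Defs
  imports Main "HOL-Library.Sublist" "HOL-Library.Countable"
begin

text \<open>An activation algebra is a type 'a of class finite and bounded_semilattice_sup_bot
 (finite join-semilattice with least element bot = 0) together with alpha different from bot.
 Morphisms X -> Y are relations R contained in X x A x Y.\<close>

definition mcomp :: "('x \<times> 'a::sup \<times> 'x) set \<Rightarrow> ('x \<times> 'a \<times> 'x) set \<Rightarrow> ('x \<times> 'a \<times> 'x) set" where
  "mcomp R' R = {(x, c, z). \<exists>y a b. (x, a, y) \<in> R \<and> (y, b, z) \<in> R' \<and> c = sup a b}"

definition mid :: "'x set \<Rightarrow> ('x \<times> 'a::bot \<times> 'x) set" where
  "mid X = {(x, bot, x) | x. x \<in> X}"

text \<open>seg tau X0 m d = tau(m+d-1) o ... o tau(m), with X0 the domain of tau(m).\<close>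
fun seg :: "(nat \<Rightarrow> ('x \<times> 'a::{sup,bot} \<times> 'x) set) \<Rightarrow> 'x set \<Rightarrow> nat \<Rightarrow> nat \<Rightarrow> ('x \<times> 'a \<times> 'x) set" where
  "seg \<tau> X0 m 0 = mid X0"
| "seg \<tau> X0 m (Suc d) = mcomp (\<tau> (m + d)) (seg \<tau> X0 m d)"

text \<open>Trace condition for a composable sequence tau with tau i : X i -> X (i+1).\<close>
definition trace_cond :: "'a::{sup,bot} \<Rightarrow> (nat \<Rightarrow> 'x set) \<Rightarrow> (nat \<Rightarrow> ('x \<times> 'a \<times> 'x) set) \<Rightarrow> bool" where
  "trace_cond \<alpha> X \<tau> \<longleftrightarrow> (\<exists>k s. strict_mono k \<and> (\<forall>i. s i \<in> X (k i)) \<and>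
      (\<forall>i. (s i, \<alpha>, s (Suc i)) \<in> seg \<tau> (X (k i)) (k i) (k (Suc i) - k i)))"

definition Chld :: "nat list set \<Rightarrow> nat list \<Rightarrow> nat list set" where
  "Chld T t = {t @ [i] | i. t @ [i] \<in> T}"

definition leaf :: "nat list set \<Rightarrow> nat list \<Rightarrow> bool" where
  "leaf T t \<longleftrightarrow> Chld T t = {}"

definition is_tree :: "nat list set \<Rightarrow> bool" where
  "is_tree T \<longleftrightarrow> T \<noteq> {} \<and> (\<forall>t u. t @ u \<in> T \<longrightarrow> t \<in> T)"

definition cyclic_tree :: "nat list set \<Rightarrow> (nat list \<Rightarrow> nat list option) \<Rightarrow> bool" where
  "cyclic_tree T \<beta> \<longleftrightarrow> finite T \<and> is_tree T \<and>
     (\<forall>t\<in>T. \<forall>c. \<beta> t = Some c \<longrightarrow> leaf T t \<and> c \<in> T \<and> \<not> leaf T c \<and> strict_prefix c t)"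

definition branch :: "nat list set \<Rightarrow> (nat list \<Rightarrow> nat list option) \<Rightarrow> (nat \<Rightarrow> nat list) \<Rightarrow> bool" where
  "branch T \<beta> \<pi> \<longleftrightarrow> \<pi> 0 = [] \<and>
     (\<forall>i. \<pi> i \<in> T \<and> (if leaf T (\<pi> i) then \<beta> (\<pi> i) = Some (\<pi> (Suc i))
                        else \<pi> (Suc i) \<in> Chld T (\<pi> i)))"

text \<open>A derivation system: sequents Seq, rules Rl, each rule R with conclusion concl R and
 premise list prems R (premise i corresponds to child t @ [i], i < length (prems R)).\<close>

definition derivation_system :: "'s set \<Rightarrow> 'r set \<Rightarrow> ('r \<Rightarrow> 's) \<Rightarrow> ('r \<Rightarrow> 's list) \<Rightarrow> bool" where
  "derivation_system Seq Rl concl prems \<longleftrightarrow> (\<forall>R\<in>Rl. concl R \<in> Seq \<and> set (prems R) \<subseteq> Seq)"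

definition preproof :: "'s set \<Rightarrow> 'r set \<Rightarrow> ('r \<Rightarrow> 's) \<Rightarrow> ('r \<Rightarrow> 's list) \<Rightarrow>
    nat list set \<Rightarrow> (nat list \<Rightarrow> nat list option) \<Rightarrow> (nat list \<Rightarrow> 's) \<Rightarrow> (nat list \<Rightarrow> 'r option) \<Rightarrow> bool" where
  "preproof Seq Rl concl prems T \<beta> lab \<delta> \<longleftrightarrow>
     cyclic_tree T \<beta> \<and>
     (\<forall>t\<in>T. lab t \<in> Seq) \<and>
     (\<forall>t\<in>T. \<forall>c. \<beta> t = Some c \<longrightarrow> lab t = lab c) \<and>
     (\<forall>t\<in>T. \<beta> t \<noteq> None \<longrightarrow> \<delta> t = None) \<and>
     (\<forall>t\<in>T. \<beta> t = None \<longrightarrow>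
        (case \<delta> t of
           None \<Rightarrow> leaf T t
         | Some R \<Rightarrow> R \<in> Rl \<and> concl R = lab t \<and>
              Chld T t = {t @ [i] | i. i < length (prems R)} \<and>
              (\<forall>i < length (prems R). lab (t @ [i]) = prems R ! i)))"

definition assumption_free :: "nat list set \<Rightarrow> (nat list \<Rightarrow> nat list option) \<Rightarrow> (nat list \<Rightarrow> 'r option) \<Rightarrow> bool" where
  "assumption_free T \<beta> \<delta> \<longleftrightarrow> (\<forall>t\<in>T. \<beta> t = None \<longrightarrow> \<delta> t \<noteq> None)"

definition trace_interp :: "'s set \<Rightarrow> 'r set \<Rightarrow> ('r \<Rightarrow> 's) \<Rightarrow> ('r \<Rightarrow> 's list) \<Rightarrow>
    ('s \<Rightarrow> 'x set) \<Rightarrow> ('r \<Rightarrow> ('x \<times> 'a \<times> 'x) set list) \<Rightarrow> bool" where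
  "trace_interp Seq Rl concl prems iobj imor \<longleftrightarrow>
     (\<forall>\<Gamma>\<in>Seq. finite (iobj \<Gamma>)) \<and>
     (\<forall>R\<in>Rl. length (imor R) = length (prems R) \<and>
        (\<forall>i < length (prems R). imor R ! i \<subseteq> iobj (concl R) \<times> UNIV \<times> iobj (prems R ! i)))"

definition branch_mor :: "nat list set \<Rightarrow> (nat list \<Rightarrow> 's) \<Rightarrow> (nat list \<Rightarrow> 'r option) \<Rightarrow>
    ('s \<Rightarrow> 'x set) \<Rightarrow> ('r \<Rightarrow> ('x \<times> 'a::bot \<times> 'x) set list) \<Rightarrow> (nat \<Rightarrow> nat list) \<Rightarrow> nat \<Rightarrow> ('x \<times> 'a \<times> 'x) set" where
  "branch_mor T lab \<delta> iobj imor \<pi> i =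
     (if leaf T (\<pi> i) then mid (iobj (lab (\<pi> i)))
      else imor (the (\<delta> (\<pi> i))) ! last (\<pi> (Suc i)))"

definition iota_proof :: "'a::{sup,bot} \<Rightarrow> 's set \<Rightarrow> 'r set \<Rightarrow> ('r \<Rightarrow> 's) \<Rightarrow> ('r \<Rightarrow> 's list) \<Rightarrow>
    ('s \<Rightarrow> 'x set) \<Rightarrow> ('r \<Rightarrow> ('x \<times> 'a \<times> 'x) set list) \<Rightarrow>
    nat list set \<Rightarrow> (nat list \<Rightarrow> nat list option) \<Rightarrow> (nat list \<Rightarrow> 's) \<Rightarrow> (nat list \<Rightarrow> 'r option) \<Rightarrow> bool" where
  "iota_proof \<alpha> Seq Rl concl prems iobj imor T \<beta> lab \<delta> \<longleftrightarrow>
     preproof Seq Rl concl prems T \<beta> lab \<delta> \<and> assumption_free T \<beta> \<delta> \<and>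
     (\<forall>\<pi>. branch T \<beta> \<pi> \<longrightarrow>
        trace_cond \<alpha> (\<lambda>i. iobj (lab (\<pi> i))) (branch_mor T lab \<delta> iobj imor \<pi>))"

section \<open>Safra boards\<close>

text \<open>A board (Theta, sigma): the control Theta is a distinct list of chips (earlier = lower),
 sigma x a is the set of stacks (finite sets of chips) at position (x, a).\<close>

type_synonym ('c, 'x, 'a) board = "'c list \<times> ('x \<Rightarrow> 'a \<Rightarrow> 'c set set)"

definition board_on :: "'x set \<Rightarrow> ('c, 'x, 'a) board \<Rightarrow> bool" where
  "board_on X b \<longleftrightarrow> distinct (fst b) \<and>
     (\<forall>x a. x \<notin> X \<longrightarrow> snd b x a = {}) \<and>
     (\<forall>x a S. S \<in> snd b x a \<longrightarrow> S \<subseteq> set (fst b)) \<and>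
     (\<forall>\<gamma>\<in>set (fst b). \<exists>x a S. S \<in> snd b x a \<and> \<gamma> \<in> S)"

definition cle :: "'c list \<Rightarrow> 'c \<Rightarrow> 'c \<Rightarrow> bool" where
  "cle \<Theta> z \<gamma> \<longleftrightarrow> (\<exists>i j. i \<le> j \<and> j < length \<Theta> \<and> \<Theta> ! i = z \<and> \<Theta> ! j = \<gamma>)"

definition is_top :: "'c list \<Rightarrow> 'c set \<Rightarrow> 'c \<Rightarrow> bool" where
  "is_top \<Theta> S \<gamma> \<longleftrightarrow> \<gamma> \<in> S \<and> (\<forall>z\<in>S. cle \<Theta> z \<gamma>)"

definition covered :: "('c, 'x, 'a) board \<Rightarrow> 'c \<Rightarrow> bool" where
  "covered b \<gamma> \<longleftrightarrow> \<gamma> \<in> set (fst b) \<and> \<not> (\<exists>x a S. S \<in> snd b x a \<and> is_top (fst b) S \<gamma>)"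

definition occ :: "('x \<Rightarrow> 'a \<Rightarrow> 'c set set) \<Rightarrow> 'c set" where
  "occ \<sigma> = {z. \<exists>x a S. S \<in> \<sigma> x a \<and> z \<in> S}"

definition weak_succ :: "('c, 'x, 'a) board \<Rightarrow> ('c, 'x, 'a) board \<Rightarrow> bool" where
  "weak_succ b b' \<longleftrightarrow> (\<forall>x a. snd b' x a \<subseteq> snd b x a) \<and>
     fst b' = filter (\<lambda>z. z \<in> occ (snd b')) (fst b)"

definition pop_succ :: "'x set \<Rightarrow> ('c, 'x, 'a::bot) board \<Rightarrow> ('c, 'x, 'a) board \<Rightarrow> bool" where
  "pop_succ X b b' \<longleftrightarrow> (\<exists>P \<subseteq> X.
     snd b' = (\<lambda>x a. if a = bot \<and> x \<in> P then insert {} (snd b x a) else snd b x a)) \<and>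
     fst b' = filter (\<lambda>z. z \<in> occ (snd b')) (fst b)"

definition reset_succ :: "'c \<Rightarrow> ('c, 'x, 'a) board \<Rightarrow> ('c, 'x, 'a) board \<Rightarrow> bool" where
  "reset_succ \<gamma> b b' \<longleftrightarrow> covered b \<gamma> \<and>
     snd b' = (\<lambda>x a. (\<lambda>S. if \<gamma> \<in> S then {z\<in>S. cle (fst b) z \<gamma>} else S) ` snd b x a) \<and>
     fst b' = filter (\<lambda>z. z \<in> occ (snd b')) (fst b)"

definition moved :: "('x \<times> 'a::sup \<times> 'x) set \<Rightarrow> ('x \<Rightarrow> 'a \<Rightarrow> 'c set set) \<Rightarrow> 'x \<Rightarrow> 'a \<Rightarrow> 'c set set" where
  "moved r \<sigma> y a = {S. \<exists>x b c. S \<in> \<sigma> x b \<and> (x, c, y) \<in> r \<and> a = sup b c}"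

definition mor_succ :: "'a::{sup,bot} \<Rightarrow> ('x \<times> 'a \<times> 'x) set \<Rightarrow> ('c, 'x, 'a) board \<Rightarrow> ('c, 'x, 'a) board \<Rightarrow> bool" where
  "mor_succ \<alpha> r b b' \<longleftrightarrow> (\<exists>(fresh :: 'x \<Rightarrow> 'c) new.
     (let \<sigma>s = moved r (snd b); Y\<alpha> = {y. \<sigma>s y \<alpha> \<noteq> {}} in
       inj_on fresh Y\<alpha> \<and> (\<forall>y\<in>Y\<alpha>. fresh y \<notin> set (fst b)) \<and>
       distinct new \<and> set new = fresh ` Y\<alpha> \<and>
       snd b' = (\<lambda>y a. if y \<in> Y\<alpha> then
                          (if a = \<alpha> then {}
                           else if a = bot then \<sigma>s y bot \<union> insert (fresh y) ` \<sigma>s y \<alpha>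
                           else \<sigma>s y a)
                        else \<sigma>s y a) \<and>
       fst b' = filter (\<lambda>z. z \<in> occ (snd b')) (fst b) @ new))"

section \<open>The reset proof system R(R)\<close>

datatype ('s, 'c, 'x, 'a, 'r) rrule =
    RWeak 's "('c, 'x, 'a) board" "('c, 'x, 'a) board"
  | RReset 's 'c "('c, 'x, 'a) board" "('c, 'x, 'a) board"
  | RPop 's "('c, 'x, 'a) board" "('c, 'x, 'a) board"
  | RAnn 'r "('c, 'x, 'a) board" "('c, 'x, 'a) board list"

fun rconcl :: "('r \<Rightarrow> 's) \<Rightarrow> ('s, 'c, 'x, 'a, 'r) rrule \<Rightarrow> 's \<times> ('c, 'x, 'a) board" where
  "rconcl concl (RWeak \<Gamma> b b') = (\<Gamma>, b)"
| "rconcl concl (RReset \<Gamma> \<gamma> b b') = (\<Gamma>, b)"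
| "rconcl concl (RPop \<Gamma> b b') = (\<Gamma>, b)"
| "rconcl concl (RAnn R b bs) = (concl R, b)"

fun rprems :: "('r \<Rightarrow> 's list) \<Rightarrow> ('s, 'c, 'x, 'a, 'r) rrule \<Rightarrow> ('s \<times> ('c, 'x, 'a) board) list" where
  "rprems prems (RWeak \<Gamma> b b') = [(\<Gamma>, b')]"
| "rprems prems (RReset \<Gamma> \<gamma> b b') = [(\<Gamma>, b')]"
| "rprems prems (RPop \<Gamma> b b') = [(\<Gamma>, b')]"
| "rprems prems (RAnn R b bs) = zip (prems R) bs"

definition RSeq :: "'s set \<Rightarrow> ('s \<Rightarrow> 'x set) \<Rightarrow> ('s \<times> ('c, 'x, 'a) board) set" where
  "RSeq Seq iobj = {(\<Gamma>, b). \<Gamma> \<in> Seq \<and> board_on (iobj \<Gamma>) b}"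

fun rrule_ok :: "'a::{sup,bot} \<Rightarrow> 's set \<Rightarrow> 'r set \<Rightarrow> ('r \<Rightarrow> 's) \<Rightarrow> ('r \<Rightarrow> 's list) \<Rightarrow>
    ('s \<Rightarrow> 'x set) \<Rightarrow> ('r \<Rightarrow> ('x \<times> 'a \<times> 'x) set list) \<Rightarrow> ('s, 'c, 'x, 'a, 'r) rrule \<Rightarrow> bool" where
  "rrule_ok \<alpha> Seq Rl concl prems iobj imor (RWeak \<Gamma> b b') \<longleftrightarrow>
     \<Gamma> \<in> Seq \<and> board_on (iobj \<Gamma>) b \<and> weak_succ b b'"
| "rrule_ok \<alpha> Seq Rl concl prems iobj imor (RReset \<Gamma> \<gamma> b b') \<longleftrightarrow>
     \<Gamma> \<in> Seq \<and> board_on (iobj \<Gamma>) b \<and> reset_succ \<gamma> b b'"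
| "rrule_ok \<alpha> Seq Rl concl prems iobj imor (RPop \<Gamma> b b') \<longleftrightarrow>
     \<Gamma> \<in> Seq \<and> board_on (iobj \<Gamma>) b \<and> pop_succ (iobj \<Gamma>) b b'"
| "rrule_ok \<alpha> Seq Rl concl prems iobj imor (RAnn R b bs) \<longleftrightarrow>
     R \<in> Rl \<and> board_on (iobj (concl R)) b \<and> length bs = length (prems R) \<and>
     (\<forall>i < length (prems R). mor_succ \<alpha> (imor R ! i) b (bs ! i))"

definition RRules :: "'a::{sup,bot} \<Rightarrow> 's set \<Rightarrow> 'r set \<Rightarrow> ('r \<Rightarrow> 's) \<Rightarrow> ('r \<Rightarrow> 's list) \<Rightarrow>
    ('s \<Rightarrow> 'x set) \<Rightarrow> ('r \<Rightarrow> ('x \<times> 'a \<times> 'x) set list) \<Rightarrow> ('s, 'c, 'x, 'a, 'r) rrule set" where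
  "RRules \<alpha> Seq Rl concl prems iobj imor = {\<rho>. rrule_ok \<alpha> Seq Rl concl prems iobj imor \<rho>}"

fun lcp2 :: "'c list \<Rightarrow> 'c list \<Rightarrow> 'c list" where
  "lcp2 (x # xs) (y # ys) = (if x = y then x # lcp2 xs ys else [])"
| "lcp2 _ _ = []"

fun lcp :: "'c list list \<Rightarrow> 'c list" where
  "lcp [] = []"
| "lcp (l # ls) = fold (\<lambda>m acc. lcp2 acc m) ls l"

definition path_nodes :: "nat list \<Rightarrow> nat list \<Rightarrow> nat list list" where
  "path_nodes t c = map (\<lambda>k. take k t) [length c..<Suc (length t)]"

definition has_invariant :: "(nat list \<Rightarrow> nat list option) \<Rightarrow> (nat list \<Rightarrow> 's \<times> ('c, 'x, 'a) board) \<Rightarrow>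
    (nat list \<Rightarrow> ('s, 'c, 'x, 'a, 'r) rrule option) \<Rightarrow> nat list \<Rightarrow> bool" where
  "has_invariant \<beta> lab \<delta> t \<longleftrightarrow>
     (case \<beta> t of None \<Rightarrow> True
      | Some c \<Rightarrow>
         (let P = path_nodes t c; \<Theta> = lcp (map (\<lambda>p. fst (snd (lab p))) P) in
           \<exists>\<theta>. \<theta> \<noteq> [] \<and> prefix \<theta> \<Theta> \<and>
             (\<exists>p\<in>set P. \<exists>\<Gamma> b b'. \<delta> p = Some (RReset \<Gamma> (last \<theta>) b b'))))"

definition reset_proof :: "'a::{sup,bot} \<Rightarrow> 's set \<Rightarrow> 'r set \<Rightarrow> ('r \<Rightarrow> 's) \<Rightarrow> ('r \<Rightarrow> 's list) \<Rightarrow>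
    ('s \<Rightarrow> 'x set) \<Rightarrow> ('r \<Rightarrow> ('x \<times> 'a \<times> 'x) set list) \<Rightarrow>
    nat list set \<Rightarrow> (nat list \<Rightarrow> nat list option) \<Rightarrow> (nat list \<Rightarrow> 's \<times> ('c, 'x, 'a) board) \<Rightarrow>
    (nat list \<Rightarrow> ('s, 'c, 'x, 'a, 'r) rrule option) \<Rightarrow> bool" where
  "reset_proof \<alpha> Seq Rl concl prems iobj imor T \<beta> lab \<delta> \<longleftrightarrow>
     preproof (RSeq Seq iobj) (RRules \<alpha> Seq Rl concl prems iobj imor) (rconcl concl) (rprems prems) T \<beta> lab \<delta> \<and>
     assumption_free T \<beta> \<delta> \<and>
     (\<forall>t\<in>T. \<beta> t \<noteq> None \<longrightarrow> has_invariant \<beta> lab \<delta> t)"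

section \<open>The preproof morphism strip\<close>

text \<open>strip erases the board annotations and contracts structural-rule steps: a node carrying a
 structural rule is identified with its unique child. Concretely, a node t of the R(R)-preproof
 that does not carry a structural rule becomes the node naddr t of strip(Pi), obtained by keeping
 only the child indices taken at nodes carrying an annotated R-rule.\<close>

definition is_ann :: "(nat list \<Rightarrow> ('s, 'c, 'x, 'a, 'r) rrule option) \<Rightarrow> nat list \<Rightarrow> bool" where
  "is_ann \<delta> t \<longleftrightarrow> (case \<delta> t of Some (RAnn R b bs) \<Rightarrow> True | _ \<Rightarrow> False)"

definition is_struct :: "(nat list \<Rightarrow> ('s, 'c, 'x, 'a, 'r) rrule option) \<Rightarrow> nat list \<Rightarrow> bool" where
  "is_struct \<delta> t \<longleftrightarrow> \<delta> t \<noteq> None \<and> \<not> is_ann \<delta> t"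

definition naddr :: "(nat list \<Rightarrow> ('s, 'c, 'x, 'a, 'r) rrule option) \<Rightarrow> nat list \<Rightarrow> nat list" where
  "naddr \<delta> t = concat (map (\<lambda>j. if is_ann \<delta> (take j t) then [t ! j] else []) [0..<length t])"

definition NS :: "nat list set \<Rightarrow> (nat list \<Rightarrow> ('s, 'c, 'x, 'a, 'r) rrule option) \<Rightarrow> nat list set" where
  "NS T \<delta> = {t\<in>T. \<not> is_struct \<delta> t}"

definition eff :: "(nat list \<Rightarrow> ('s, 'c, 'x, 'a, 'r) rrule option) \<Rightarrow> nat list \<Rightarrow> nat list" where
  "eff \<delta> t = t @ replicate (LEAST k. \<not> is_struct \<delta> (t @ replicate k 0)) 0"

definition strip_T :: "nat list set \<Rightarrow> (nat list \<Rightarrow> ('s, 'c, 'x, 'a, 'r) rrule option) \<Rightarrow> nat list set" where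
  "strip_T T \<delta> = naddr \<delta> ` NS T \<delta>"

definition strip_node :: "nat list set \<Rightarrow> (nat list \<Rightarrow> ('s, 'c, 'x, 'a, 'r) rrule option) \<Rightarrow> nat list \<Rightarrow> nat list" where
  "strip_node T \<delta> u = (SOME t. t \<in> NS T \<delta> \<and> naddr \<delta> t = u)"

definition strip_lab :: "nat list set \<Rightarrow> (nat list \<Rightarrow> ('s, 'c, 'x, 'a, 'r) rrule option) \<Rightarrow>
    (nat list \<Rightarrow> 's \<times> ('c, 'x, 'a) board) \<Rightarrow> nat list \<Rightarrow> 's" where
  "strip_lab T \<delta> lab u = fst (lab (strip_node T \<delta> u))"

definition strip_beta :: "nat list set \<Rightarrow> (nat list \<Rightarrow> nat list option) \<Rightarrow>
    (nat list \<Rightarrow> ('s, 'c, 'x, 'a, 'r) rrule option) \<Rightarrow> nat list \<Rightarrow> nat list option" where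
  "strip_beta T \<beta> \<delta> u =
     (if u \<in> strip_T T \<delta> then map_option (\<lambda>c. naddr \<delta> (eff \<delta> c)) (\<beta> (strip_node T \<delta> u)) else None)"

definition strip_delta :: "nat list set \<Rightarrow> (nat list \<Rightarrow> ('s, 'c, 'x, 'a, 'r) rrule option) \<Rightarrow> nat list \<Rightarrow> 'r option" where
  "strip_delta T \<delta> u =
     (if u \<in> strip_T T \<delta> then
        (case \<delta> (strip_node T \<delta> u) of Some (RAnn R b bs) \<Rightarrow> Some R | _ \<Rightarrow> None)
      else None)"

end

theory Submission
  imports Defs "HOL-Library.Infinite_Set"
begin

(* The morphism strip contracts every chain of structural steps (weakening, population, reset)
   into the first non-structural node below it. Along such a chain the boards only shrink, whereas a
   reset can never be undone by shrinking; since the path from every companion to its bud contains a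
   reset, no bud is contracted onto its own companion, and strip(Pi) is again a cyclic preproof.

   For the trace condition, a branch of strip(Pi) is lifted to an infinite path of Pi. Among the buds
   passed infinitely often pick one whose invariant theta is shortest: theta is a prefix of the
   control of every node visited infinitely often, so the chip gamma = last theta eventually stays in
   the control forever and is reset infinitely often. Koenig's lemma gives an infinite lineage of
   stacks containing gamma. Between two resets of gamma the lineage must push a fresh chip above
   gamma, which happens exactly when its accumulated activation reaches alpha; these alpha-steps
   form the trace. *)

section \<open>Koenig's lemma for layered graphs\<close>

lemma nested_finite_sets_common_element:
  assumes "finite (A 0)" and "\<And>m. A (Suc m) \<subseteq> A m" and "\<And>m. A m \<noteq> {}"
  shows "\<exists>x. \<forall>m. x \<in> A m"
proof (rule ccontr)
  assume "\<nexists>x. \<forall>m. x \<in> A m"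
  then have "\<forall>x. \<exists>m. x \<notin> A m" by blast
  then obtain leave where leave: "\<And>x. x \<notin> A (leave x)" by metis
  have antimono: "m \<le> n \<Longrightarrow> A n \<subseteq> A m" for m n
    using lift_Suc_antimono_le[of A] assms(2) by blast
  define M where "M = Max (leave ` A 0)"
  obtain x where x: "x \<in> A M" using assms(3) by blast
  then have "x \<in> A 0" using antimono by blast
  then have "leave x \<le> M" unfolding M_def using assms(1) by simp
  then show False using x leave antimono by blast
qed

definition layer_path :: "(nat \<Rightarrow> 'b set) \<Rightarrow> (nat \<Rightarrow> 'b \<Rightarrow> 'b \<Rightarrow> bool) \<Rightarrow> (nat \<Rightarrow> 'b) \<Rightarrow> nat \<Rightarrow> nat \<Rightarrow> bool" where
  "layer_path G R g n m \<longleftrightarrow> (\<forall>k\<in>{n..m}. g k \<in> G k) \<and> (\<forall>k\<in>{n..<m}. R k (g k) (g (Suc k)))"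

lemma layer_path_start: "layer_path G R g n m \<Longrightarrow> n \<le> m \<Longrightarrow> g n \<in> G n"
  unfolding layer_path_def by simp

lemma layer_path_shorten: "layer_path G R g n (Suc m) \<Longrightarrow> layer_path G R g n m"
  unfolding layer_path_def by auto

lemma layer_path_backward:
  assumes pred: "\<And>k y. n \<le> k \<Longrightarrow> y \<in> G (Suc k) \<Longrightarrow> \<exists>x\<in>G k. R k x y"
    and "y \<in> G (n + d)"
  shows "\<exists>g. g (n + d) = y \<and> layer_path G R g n (n + d)"
  using assms(2)
proof (induction d arbitrary: y)
  case 0
  then show ?case unfolding layer_path_def by (intro exI[of _ "\<lambda>_. y"]) auto
next
  case (Suc d)
  obtain x where x: "x \<in> G (n + d)" "R (n + d) x y" using pred[of "n + d" y] Suc.prems by auto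
  obtain g where g: "g (n + d) = x" "layer_path G R g n (n + d)" using Suc.IH[OF x(1)] by blast
  define g' where "g' = g(n + Suc d := y)"
  have "layer_path G R g' n (n + Suc d)"
    unfolding layer_path_def
  proof (intro conjI ballI)
    fix k
    show "g' k \<in> G k" if "k \<in> {n..n + Suc d}"
    proof (cases "k = n + Suc d")
      case True
      then show ?thesis using Suc.prems by (simp add: g'_def)
    next
      case False
      with that have "k \<in> {n..n + d}" by auto
      then show ?thesis using g(2) False unfolding layer_path_def g'_def by simp
    qed
    show "R k (g' k) (g' (Suc k))" if "k \<in> {n..<n + Suc d}"
    proof (cases "k = n + d")
      case True
      then show ?thesis using g(1) x(2) by (simp add: g'_def)
    next
      case False
      with that have "k \<in> {n..<n + d}" by auto
      then show ?thesis using g(2) unfolding layer_path_def g'_def by simp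
    qed
  qed
  moreover have "g' (n + Suc d) = y" by (simp add: g'_def)
  ultimately show ?case by blast
qed

definition extensible :: "(nat \<Rightarrow> 'b set) \<Rightarrow> (nat \<Rightarrow> 'b \<Rightarrow> 'b \<Rightarrow> bool) \<Rightarrow> nat \<Rightarrow> 'b \<Rightarrow> bool" where
  "extensible G R n x \<longleftrightarrow> (\<forall>d. \<exists>g. g n = x \<and> layer_path G R g n (n + d))"

context
  fixes G :: "nat \<Rightarrow> 'b set" and R :: "nat \<Rightarrow> 'b \<Rightarrow> 'b \<Rightarrow> bool" and n0 :: nat
  assumes finite_layer: "\<And>n. n \<ge> n0 \<Longrightarrow> finite (G n)"
    and nonempty_layer: "\<And>n. n \<ge> n0 \<Longrightarrow> G n \<noteq> {}"
    and predecessor: "\<And>n y. n \<ge> n0 \<Longrightarrow> y \<in> G (Suc n) \<Longrightarrow> \<exists>x\<in>G n. R n x y"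
begin

lemma extensible_exists: "\<exists>x. extensible G R n0 x"
proof -
  define A where "A d = {x. \<exists>g. g n0 = x \<and> layer_path G R g n0 (n0 + d)}" for d
  have "\<exists>x. \<forall>d. x \<in> A d"
  proof (rule nested_finite_sets_common_element)
    have "A 0 \<subseteq> G n0" unfolding A_def layer_path_def by auto
    then show "finite (A 0)" using finite_layer finite_subset by blast
    show "A (Suc d) \<subseteq> A d" for d unfolding A_def using layer_path_shorten by (simp add: Collect_mono_iff) blast
    show "A d \<noteq> {}" for d
    proof -
      obtain y where y: "y \<in> G (n0 + d)" using nonempty_layer by fastforce
      have "\<exists>g. g (n0 + d) = y \<and> layer_path G R g n0 (n0 + d)"
        by (rule layer_path_backward) (use predecessor y in auto)
      then obtain g where "layer_path G R g n0 (n0 + d)" by blast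
      then show ?thesis unfolding A_def by blast
    qed
  qed
  then show ?thesis unfolding A_def extensible_def by blast
qed

lemma extensible_step:
  assumes "n \<ge> n0" and "extensible G R n x"
  shows "\<exists>y. R n x y \<and> extensible G R (Suc n) y"
proof -
  define B where "B d = {y. R n x y \<and> (\<exists>g. g (Suc n) = y \<and> layer_path G R g (Suc n) (Suc n + d))}" for d
  have "\<exists>y. \<forall>d. y \<in> B d"
  proof (rule nested_finite_sets_common_element)
    have "B 0 \<subseteq> G (Suc n)" unfolding B_def layer_path_def by auto
    moreover have "finite (G (Suc n))" using finite_layer assms(1) by simp
    ultimately show "finite (B 0)" using finite_subset by blast
    show "B (Suc d) \<subseteq> B d" for d unfolding B_def using layer_path_shorten by (simp add: Collect_mono_iff) blast
    show "B d \<noteq> {}" for d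
    proof -
      obtain g where g: "g n = x" "layer_path G R g n (n + Suc d)"
        using assms(2) unfolding extensible_def by blast
      then have "layer_path G R g (Suc n) (Suc n + d)" "R n x (g (Suc n))"
        unfolding layer_path_def by auto
      then have "g (Suc n) \<in> B d" unfolding B_def by blast
      then show ?thesis by blast
    qed
  qed
  then obtain y where "\<forall>d. y \<in> B d" by blast
  then have "R n x y" "extensible G R (Suc n) y" unfolding B_def extensible_def by auto
  then show ?thesis by blast
qed

lemma koenig_layered_path: "\<exists>f. \<forall>n\<ge>n0. f n \<in> G n \<and> R n (f n) (f (Suc n))"
proof -
  have "\<exists>h. \<forall>k. extensible G R (n0 + k) (h k) \<and> R (n0 + k) (h k) (h (Suc k))"
  proof (rule dependent_nat_choice[where P = "\<lambda>k. extensible G R (n0 + k)" and Q = "\<lambda>k. R (n0 + k)"])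
    show "\<exists>x. extensible G R (n0 + 0) x" using extensible_exists by simp
    show "\<exists>y. extensible G R (n0 + Suc k) y \<and> R (n0 + k) x y" if "extensible G R (n0 + k) x" for x k
      using extensible_step[OF le_add1 that] by auto
  qed
  then obtain h where h: "\<And>k. extensible G R (n0 + k) (h k)" "\<And>k. R (n0 + k) (h k) (h (Suc k))"
    by blast
  have "h k \<in> G (n0 + k)" for k
  proof -
    obtain g where "g (n0 + k) = h k" "layer_path G R g (n0 + k) (n0 + k + 0)"
      using h(1)[of k] unfolding extensible_def by blast
    then show ?thesis using layer_path_start[of G R g "n0 + k" "n0 + k + 0"] by simp
  qed
  have "h (n - n0) \<in> G n \<and> R n (h (n - n0)) (h (Suc n - n0))" if n: "n \<ge> n0" for n
  proof -
    obtain k where "n = n0 + k" using le_Suc_ex[OF n] by blast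
    then show ?thesis using h(2)[of k] \<open>h k \<in> G (n0 + k)\<close> by (simp add: Suc_diff_le)
  qed
  then show ?thesis by (intro exI[of _ "\<lambda>n. h (n - n0)"]) simp
qed

end

lemma lcp_prefix:
  assumes "l \<in> set ls"
  shows "prefix (lcp ls) l"
proof -
  have lcp2: "prefix (lcp2 a b) a \<and> prefix (lcp2 a b) b" for a b :: "'c list"
    by (induction a b rule: lcp2.induct) auto
  have fold: "prefix (fold (\<lambda>m acc. lcp2 acc m) ms a) a \<and>
      (\<forall>m\<in>set ms. prefix (fold (\<lambda>m acc. lcp2 acc m) ms a) m)" for ms and a :: "'c list"
  proof (induction ms arbitrary: a)
    case (Cons m ms)
    then show ?case using lcp2[of a m] by (auto intro: prefix_order.order_trans)
  qed simp
  show ?thesis using assms fold by (cases ls) auto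
qed

lemma take_prefix: "prefix a x \<Longrightarrow> k \<le> length a \<Longrightarrow> take k x = take k a"
  by (auto simp: prefix_def)

lemma set_path_nodes: "p \<in> set (path_nodes t c) \<longleftrightarrow> (\<exists>l\<in>{length c..length t}. p = take l t)"
  by (auto simp: path_nodes_def)

lemma prefix_in_path_nodes: "prefix c u \<Longrightarrow> prefix u t \<Longrightarrow> u \<in> set (path_nodes t c)"
  unfolding set_path_nodes
  by (metis atLeastAtMost_iff append_eq_conv_conj prefix_def prefix_length_le)

lemma board_on_stack: "board_on X b \<Longrightarrow> S \<in> snd b x a \<Longrightarrow> x \<in> X \<and> S \<subseteq> set (fst b)"
  unfolding board_on_def by blast

lemma board_on_chip: "board_on X b \<Longrightarrow> \<gamma> \<in> set (fst b) \<Longrightarrow> \<exists>x a S. S \<in> snd b x a \<and> \<gamma> \<in> S"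
  unfolding board_on_def by blast

definition board_dominated :: "('c, 'x, 'a) board \<Rightarrow> ('c, 'x, 'a) board \<Rightarrow> bool" where
  "board_dominated b' b \<longleftrightarrow> (\<forall>x a S'. S' \<in> snd b' x a \<longrightarrow> S' \<noteq> {} \<longrightarrow> (\<exists>S\<in>snd b x a. S' \<subseteq> S))"

lemma board_dominated_refl: "board_dominated b b"
  by (auto simp: board_dominated_def)

lemma board_dominated_trans: "board_dominated b3 b2 \<Longrightarrow> board_dominated b2 b1 \<Longrightarrow> board_dominated b3 b1"
  unfolding board_dominated_def by (metis bot.extremum_uniqueI subset_trans)

lemma weak_succ_dominated: "weak_succ b b' \<Longrightarrow> board_dominated b' b"
  unfolding board_dominated_def weak_succ_def by blast

lemma pop_succ_dominated: "pop_succ X b b' \<Longrightarrow> board_dominated b' b"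
  unfolding board_dominated_def pop_succ_def by (auto split: if_splits)

lemma reset_succ_dominated: "reset_succ \<gamma> b b' \<Longrightarrow> board_dominated b' b"
  unfolding board_dominated_def reset_succ_def by auto

lemma reset_succ_truncates:
  assumes "reset_succ \<gamma> b b'" and "S' \<in> snd b' x a" and "\<gamma> \<in> S'"
  shows "\<forall>z\<in>S'. cle (fst b) z \<gamma>"
  using assms unfolding reset_succ_def by (auto split: if_splits)

lemma reset_succ_covered:
  assumes "reset_succ \<gamma> b b'" and "S \<in> snd b x a" and "\<gamma> \<in> S"
  shows "\<exists>z\<in>S. \<not> cle (fst b) z \<gamma>"
  using assms unfolding reset_succ_def covered_def is_top_def by blast

lemma reset_succ_not_dominated:
  assumes "reset_succ \<gamma> b b'" and "board_on X b"
  shows "\<not> board_dominated b b'"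
proof
  assume dom: "board_dominated b b'"
  have "\<gamma> \<in> set (fst b)" using assms(1) by (simp add: reset_succ_def covered_def)
  then obtain x a S where S: "S \<in> snd b x a" "\<gamma> \<in> S" using board_on_chip[OF assms(2)] by blast
  then obtain S' where S': "S' \<in> snd b' x a" "S \<subseteq> S'" using dom unfolding board_dominated_def by blast
  then have "\<forall>z\<in>S. cle (fst b) z \<gamma>" using reset_succ_truncates[OF assms(1) S'(1)] S(2) by blast
  then show False using reset_succ_covered[OF assms(1) S] by blast
qed

definition control_succ :: "'c list \<Rightarrow> 'c list \<Rightarrow> bool" where
  "control_succ \<Theta> \<Theta>' \<longleftrightarrow> (\<exists>P new. \<Theta>' = filter P \<Theta> @ new \<and> set new \<inter> set \<Theta> = {})"

lemma cle_iff_split: "cle \<Theta> z \<gamma> \<longleftrightarrow> (\<exists>us vs. \<Theta> = us @ \<gamma> # vs \<and> z \<in> set (us @ [\<gamma>]))"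
proof
  assume "cle \<Theta> z \<gamma>"
  then obtain i j where ij: "i \<le> j" "j < length \<Theta>" "\<Theta> ! i = z" "\<Theta> ! j = \<gamma>" by (auto simp: cle_def)
  have "\<Theta> = take j \<Theta> @ \<gamma> # drop (Suc j) \<Theta>" using ij id_take_nth_drop[of j \<Theta>] by simp
  moreover have "z \<in> set (take j \<Theta> @ [\<gamma>])"
  proof (cases "i = j")
    case False
    then have "take j \<Theta> ! i = z" "i < length (take j \<Theta>)" using ij by auto
    then show ?thesis by (metis UnI1 nth_mem set_append)
  qed (use ij in simp)
  ultimately show "\<exists>us vs. \<Theta> = us @ \<gamma> # vs \<and> z \<in> set (us @ [\<gamma>])" by blast
next
  assume "\<exists>us vs. \<Theta> = us @ \<gamma> # vs \<and> z \<in> set (us @ [\<gamma>])"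
  then obtain us vs i where "\<Theta> = us @ \<gamma> # vs" "i < length (us @ [\<gamma>])" "(us @ [\<gamma>]) ! i = z"
    by (metis in_set_conv_nth)
  then show "cle \<Theta> z \<gamma>" unfolding cle_def
    by (intro exI[of _ i] exI[of _ "length us"]) (auto simp: nth_append split: if_splits)
qed

lemma cle_control_succ:
  assumes "control_succ \<Theta> \<Theta>'" and "cle \<Theta> z \<gamma>" and "z \<in> set \<Theta>'" and "\<gamma> \<in> set \<Theta>'"
  shows "cle \<Theta>' z \<gamma>"
proof -
  obtain P new where Pn: "\<Theta>' = filter P \<Theta> @ new" "set new \<inter> set \<Theta> = {}"
    using assms(1) unfolding control_succ_def by blast
  obtain us vs where uv: "\<Theta> = us @ \<gamma> # vs" "z \<in> set (us @ [\<gamma>])" using assms(2) cle_iff_split by metis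
  have "\<gamma> \<notin> set new" "z \<notin> set new" using Pn(2) uv by auto
  then have "P \<gamma>" "P z" using Pn(1) assms(3,4) by auto
  then have "\<Theta>' = filter P us @ \<gamma> # (filter P vs @ new)" "z \<in> set (filter P us @ [\<gamma>])"
    using Pn(1) uv by auto
  then show ?thesis using cle_iff_split by metis
qed

lemma control_succ_weak: "weak_succ b b' \<Longrightarrow> control_succ (fst b) (fst b')"
  unfolding weak_succ_def control_succ_def by (metis append_Nil2 empty_set inf_bot_left)

lemma control_succ_pop: "pop_succ X b b' \<Longrightarrow> control_succ (fst b) (fst b')"
  unfolding pop_succ_def control_succ_def by (metis append_Nil2 empty_set inf_bot_left)

lemma control_succ_reset: "reset_succ \<gamma> b b' \<Longrightarrow> control_succ (fst b) (fst b')"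
  unfolding reset_succ_def control_succ_def by (metis append_Nil2 empty_set inf_bot_left)

context
  fixes \<alpha> :: "'a::{sup,bot}" and r :: "('x \<times> 'a \<times> 'x) set" and b b' :: "('c, 'x, 'a) board"
  assumes mor: "mor_succ \<alpha> r b b'"
begin

lemma mor_succ_new_chips:
  obtains new where "set new \<inter> set (fst b) = {}" and "fst b' = filter (\<lambda>z. z \<in> occ (snd b')) (fst b) @ new"
proof -
  obtain fresh :: "'x \<Rightarrow> 'c" and new where
    fresh: "\<forall>y\<in>{y. moved r (snd b) y \<alpha> \<noteq> {}}. fresh y \<notin> set (fst b)"
    and new: "set new = fresh ` {y. moved r (snd b) y \<alpha> \<noteq> {}}"
    and "fst b' = filter (\<lambda>z. z \<in> occ (snd b')) (fst b) @ new"
    using mor unfolding mor_succ_def Let_def by blast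
  moreover have "set new \<inter> set (fst b) = {}" unfolding new using fresh by auto
  ultimately show ?thesis using that by blast
qed

lemma mor_succ_stacks:
  obtains fresh :: "'x \<Rightarrow> 'c" where
    "\<forall>y\<in>{y. moved r (snd b) y \<alpha> \<noteq> {}}. fresh y \<notin> set (fst b)"
    "snd b' = (\<lambda>y a. if y \<in> {y. moved r (snd b) y \<alpha> \<noteq> {}} then
                    (if a = \<alpha> then {}
                     else if a = bot then moved r (snd b) y bot \<union> insert (fresh y) ` moved r (snd b) y \<alpha>
                     else moved r (snd b) y a)
                  else moved r (snd b) y a)"
  using mor unfolding mor_succ_def Let_def by blast

lemma control_succ_mor: "control_succ (fst b) (fst b')"
  using mor_succ_new_chips unfolding control_succ_def by metis

lemma mor_succ_stack_cases:
  assumes "S' \<in> snd b' y a'"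
  shows "S' \<in> moved r (snd b) y a' \<or>
    (a' = bot \<and> (\<exists>S\<in>moved r (snd b) y \<alpha>. \<exists>z. z \<notin> set (fst b) \<and> S' = insert z S))"
proof -
  obtain fresh :: "'x \<Rightarrow> 'c" where
    fresh: "\<forall>y\<in>{y. moved r (snd b) y \<alpha> \<noteq> {}}. fresh y \<notin> set (fst b)" and
    stacks: "snd b' = (\<lambda>y a. if y \<in> {y. moved r (snd b) y \<alpha> \<noteq> {}} then
                    (if a = \<alpha> then {}
                     else if a = bot then moved r (snd b) y bot \<union> insert (fresh y) ` moved r (snd b) y \<alpha>
                     else moved r (snd b) y a)
                  else moved r (snd b) y a)"
    by (rule mor_succ_stacks)
  show ?thesis
  proof (cases "moved r (snd b) y \<alpha> \<noteq> {} \<and> a' = bot \<and> a' \<noteq> \<alpha>")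
    case True
    then have "S' \<in> moved r (snd b) y bot \<union> insert (fresh y) ` moved r (snd b) y \<alpha>"
      using assms unfolding stacks by (simp split: if_splits)
    then show ?thesis using True fresh by auto
  next
    case False
    then have "S' \<in> moved r (snd b) y a'" using assms unfolding stacks by (auto split: if_splits)
    then show ?thesis ..
  qed
qed

end

lemma mor_succ_stack_origin:
  fixes \<alpha> :: "'a::{semilattice_sup,bot}"
  assumes "mor_succ \<alpha> r b b'" and "S' \<in> snd b' y a'" and "\<gamma> \<in> S'" and "\<gamma> \<in> set (fst b)"
  shows "\<exists>x a S c. S \<in> snd b x a \<and> \<gamma> \<in> S \<and> (x, c, y) \<in> r \<and>
     ((a' = sup a c \<and> S' = S) \<or> (sup a c = \<alpha> \<and> a' = bot \<and> (\<exists>z. S' = insert z S)))"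
  using mor_succ_stack_cases[OF assms(1,2)] assms(3,4) unfolding moved_def by blast

lemma leaf_no_child: "leaf T t \<Longrightarrow> t @ [i] \<notin> T"
  by (auto simp: leaf_def Chld_def)

lemma is_ann_iff: "is_ann \<delta> t \<longleftrightarrow> (\<exists>R b bs. \<delta> t = Some (RAnn R b bs))"
  unfolding is_ann_def by (auto split: option.splits rrule.splits)

lemma is_struct_not_ann: "is_struct \<delta> t \<Longrightarrow> \<not> is_ann \<delta> t"
  by (simp add: is_struct_def)

locale reset_proof_tree =
  fixes \<alpha> :: "'a::{finite, bounded_semilattice_sup_bot}"
    and Seq :: "'s set" and Rl :: "'r set"
    and concl :: "'r \<Rightarrow> 's" and prems :: "'r \<Rightarrow> 's list"
    and iobj :: "'s \<Rightarrow> 'x set" and imor :: "'r \<Rightarrow> ('x \<times> 'a \<times> 'x) set list"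
    and T :: "nat list set" and \<beta> :: "nat list \<Rightarrow> nat list option"
    and lab :: "nat list \<Rightarrow> 's \<times> ('c, 'x, 'a) board"
    and \<delta> :: "nat list \<Rightarrow> ('s, 'c, 'x, 'a, 'r) rrule option"
  assumes interp: "trace_interp Seq Rl concl prems iobj imor"
    and is_reset_proof: "reset_proof \<alpha> Seq Rl concl prems iobj imor T \<beta> lab \<delta>"
begin

abbreviation seq_of :: "nat list \<Rightarrow> 's" where "seq_of t \<equiv> fst (lab t)"
abbreviation board_of :: "nat list \<Rightarrow> ('c, 'x, 'a) board" where "board_of t \<equiv> snd (lab t)"
abbreviation ctrl_of :: "nat list \<Rightarrow> 'c list" where "ctrl_of t \<equiv> fst (snd (lab t))"

lemma reset_preproof:
  "preproof (RSeq Seq iobj) (RRules \<alpha> Seq Rl concl prems iobj imor) (rconcl concl) (rprems prems) T \<beta> lab \<delta>"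
  using is_reset_proof by (simp add: reset_proof_def)

lemma reset_assumption_free: "assumption_free T \<beta> \<delta>"
  using is_reset_proof by (simp add: reset_proof_def)

lemma cyclic_tree_T: "cyclic_tree T \<beta>"
  using reset_preproof by (simp add: preproof_def)

lemma finite_T: "finite T"
  using cyclic_tree_T by (simp add: cyclic_tree_def)

lemma prefix_closed_T: "t @ u \<in> T \<Longrightarrow> t \<in> T"
  using cyclic_tree_T unfolding cyclic_tree_def is_tree_def by blast

lemma root_in_T: "[] \<in> T"
proof -
  obtain t where "t \<in> T" using cyclic_tree_T unfolding cyclic_tree_def is_tree_def by blast
  then show ?thesis using prefix_closed_T[of "[]" t] by simp
qed

lemma lab_well_formed: "t \<in> T \<Longrightarrow> seq_of t \<in> Seq \<and> board_on (iobj (seq_of t)) (board_of t)"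
  using reset_preproof unfolding preproof_def RSeq_def by (cases "lab t") auto

lemma finite_iobj: "t \<in> T \<Longrightarrow> finite (iobj (seq_of t))"
  using interp lab_well_formed unfolding trace_interp_def by blast

lemma bud_props:
  assumes "t \<in> T" and "\<beta> t = Some c"
  shows "leaf T t \<and> c \<in> T \<and> \<not> leaf T c \<and> strict_prefix c t \<and> lab t = lab c \<and> \<delta> t = None"
  using assms cyclic_tree_T reset_preproof unfolding cyclic_tree_def preproof_def by blast

lemma rule_at:
  assumes "t \<in> T" and "\<beta> t = None"
  obtains \<rho> where "\<delta> t = Some \<rho>" "rrule_ok \<alpha> Seq Rl concl prems iobj imor \<rho>" "rconcl concl \<rho> = lab t"
    "\<And>i. t @ [i] \<in> T \<longleftrightarrow> i < length (rprems prems \<rho>)"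
    "\<And>i. i < length (rprems prems \<rho>) \<Longrightarrow> lab (t @ [i]) = rprems prems \<rho> ! i"
proof -
  obtain \<rho> where \<rho>: "\<delta> t = Some \<rho>" using reset_assumption_free assms by (auto simp: assumption_free_def)
  have "\<forall>t\<in>T. \<beta> t = None \<longrightarrow> (case \<delta> t of None \<Rightarrow> leaf T t
      | Some \<rho> \<Rightarrow> \<rho> \<in> RRules \<alpha> Seq Rl concl prems iobj imor \<and> rconcl concl \<rho> = lab t \<and>
          Chld T t = {t @ [i] | i. i < length (rprems prems \<rho>)} \<and>
          (\<forall>i < length (rprems prems \<rho>). lab (t @ [i]) = rprems prems \<rho> ! i))"
    using reset_preproof unfolding preproof_def by blast
  with assms \<rho> have "\<rho> \<in> RRules \<alpha> Seq Rl concl prems iobj imor \<and> rconcl concl \<rho> = lab t \<and>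
      Chld T t = {t @ [i] | i. i < length (rprems prems \<rho>)} \<and>
      (\<forall>i < length (rprems prems \<rho>). lab (t @ [i]) = rprems prems \<rho> ! i)"
    by auto
  moreover have "t @ [i] \<in> T \<longleftrightarrow> t @ [i] \<in> Chld T t" for i
    by (auto simp: Chld_def)
  ultimately have "t @ [i] \<in> T \<longleftrightarrow> i < length (rprems prems \<rho>)" for i
    by auto
  then show ?thesis using that \<rho> \<open>\<rho> \<in> RRules _ _ _ _ _ _ _ \<and> _\<close> unfolding RRules_def by auto
qed

lemma node_cases:
  assumes "t \<in> T"
  obtains (bud) c where "\<beta> t = Some c" "\<delta> t = None"
  | (struct) "is_struct \<delta> t" "\<beta> t = None"
  | (ann) R b bs where "\<delta> t = Some (RAnn R b bs)" "\<beta> t = None"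
proof (cases "\<beta> t")
  case None
  with rule_at[OF assms] obtain \<rho> where "\<delta> t = Some \<rho>" by blast
  then show ?thesis using None that unfolding is_struct_def is_ann_iff by (cases \<rho>) auto
next
  case (Some c)
  then show ?thesis using bud_props[OF assms Some] that by auto
qed

lemma rule_not_bud: "t \<in> T \<Longrightarrow> \<delta> t \<noteq> None \<Longrightarrow> \<beta> t = None"
  using bud_props by (cases "\<beta> t") auto

lemma struct_step:
  assumes "t \<in> T" and "is_struct \<delta> t"
  shows "\<beta> t = None" and "t @ [i] \<in> T \<longleftrightarrow> i = 0" and "seq_of (t @ [0]) = seq_of t"
    and "control_succ (ctrl_of t) (ctrl_of (t @ [0]))"
    and "board_dominated (board_of (t @ [0])) (board_of t)"
proof -
  show bN: "\<beta> t = None" using assms rule_not_bud unfolding is_struct_def by blast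
  obtain \<rho> where \<rho>: "\<delta> t = Some \<rho>" "rrule_ok \<alpha> Seq Rl concl prems iobj imor \<rho>" "rconcl concl \<rho> = lab t"
    "\<And>i. t @ [i] \<in> T \<longleftrightarrow> i < length (rprems prems \<rho>)"
    "\<And>i. i < length (rprems prems \<rho>) \<Longrightarrow> lab (t @ [i]) = rprems prems \<rho> ! i"
    using rule_at[OF assms(1) bN] by blast
  have "length (rprems prems \<rho>) = 1 \<and> seq_of (t @ [0]) = seq_of t \<and>
      control_succ (ctrl_of t) (ctrl_of (t @ [0])) \<and> board_dominated (board_of (t @ [0])) (board_of t)"
  proof (cases \<rho>)
    case (RWeak \<Gamma> b b')
    with \<rho> have l: "lab t = (\<Gamma>, b)" "lab (t @ [0]) = (\<Gamma>, b')" "weak_succ b b'"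
      by auto
    then show ?thesis using RWeak control_succ_weak[OF l(3)] weak_succ_dominated[OF l(3)] by simp
  next
    case (RPop \<Gamma> b b')
    with \<rho> have l: "lab t = (\<Gamma>, b)" "lab (t @ [0]) = (\<Gamma>, b')" "pop_succ (iobj \<Gamma>) b b'"
      by auto
    then show ?thesis using RPop control_succ_pop[OF l(3)] pop_succ_dominated[OF l(3)] by simp
  next
    case (RReset \<Gamma> \<gamma> b b')
    with \<rho> have l: "lab t = (\<Gamma>, b)" "lab (t @ [0]) = (\<Gamma>, b')" "reset_succ \<gamma> b b'"
      by auto
    then show ?thesis using RReset control_succ_reset[OF l(3)] reset_succ_dominated[OF l(3)] by simp
  next
    case (RAnn R b bs)
    with \<rho>(1) assms(2) show ?thesis unfolding is_struct_def is_ann_def by simp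
  qed
  then show "t @ [i] \<in> T \<longleftrightarrow> i = 0" and "seq_of (t @ [0]) = seq_of t"
    and "control_succ (ctrl_of t) (ctrl_of (t @ [0]))"
    and "board_dominated (board_of (t @ [0])) (board_of t)"
    using \<rho>(4) by auto
qed

lemma ann_step:
  assumes "t \<in> T" and "\<delta> t = Some (RAnn R b bs)"
  shows "\<beta> t = None" and "R \<in> Rl" and "lab t = (concl R, b)" and "length bs = length (prems R)"
    and "t @ [i] \<in> T \<longleftrightarrow> i < length (prems R)"
    and "j < length (prems R) \<Longrightarrow> lab (t @ [j]) = (prems R ! j, bs ! j) \<and> mor_succ \<alpha> (imor R ! j) b (bs ! j)"
proof -
  show bN: "\<beta> t = None" using assms rule_not_bud by simp
  from rule_at[OF assms(1) bN] assms(2) have r: "rrule_ok \<alpha> Seq Rl concl prems iobj imor (RAnn R b bs)"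
    "rconcl concl (RAnn R b bs) = lab t" "\<And>i. t @ [i] \<in> T \<longleftrightarrow> i < length (rprems prems (RAnn R b bs))"
    "\<And>i. i < length (rprems prems (RAnn R b bs)) \<Longrightarrow> lab (t @ [i]) = rprems prems (RAnn R b bs) ! i"
    by (metis option.inject)+
  then show "R \<in> Rl" "lab t = (concl R, b)" "length bs = length (prems R)"
    "t @ [i] \<in> T \<longleftrightarrow> i < length (prems R)"
    "j < length (prems R) \<Longrightarrow> lab (t @ [j]) = (prems R ! j, bs ! j) \<and> mor_succ \<alpha> (imor R ! j) b (bs ! j)"
    by auto
qed

lemma reset_step:
  assumes "t \<in> T" and "\<delta> t = Some (RReset \<Gamma> \<gamma> b b')"
  shows "lab t = (\<Gamma>, b) \<and> lab (t @ [0]) = (\<Gamma>, b') \<and> reset_succ \<gamma> b b'"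
proof -
  have "\<beta> t = None" using assms rule_not_bud by simp
  then obtain \<rho> where "\<delta> t = Some \<rho>" "rrule_ok \<alpha> Seq Rl concl prems iobj imor \<rho>" "rconcl concl \<rho> = lab t"
    "\<And>i. i < length (rprems prems \<rho>) \<Longrightarrow> lab (t @ [i]) = rprems prems \<rho> ! i"
    using rule_at[OF assms(1)] by blast
  moreover have "\<rho> = RReset \<Gamma> \<gamma> b b'" using assms(2) \<open>\<delta> t = Some \<rho>\<close> by simp
  ultimately show ?thesis by auto
qed

end

section \<open>Contracting structural steps\<close>

lemma naddr_Nil [simp]: "naddr \<delta> [] = []"
  by (simp add: naddr_def)

lemma naddr_snoc: "naddr \<delta> (t @ [i]) = naddr \<delta> t @ (if is_ann \<delta> t then [i] else [])"
proof -
  have e: "map (\<lambda>j. if is_ann \<delta> (take j (t @ [i])) then [(t @ [i]) ! j] else []) [0..<length t] =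
      map (\<lambda>j. if is_ann \<delta> (take j t) then [t ! j] else []) [0..<length t]"
    by (rule map_cong[OF refl]) (simp add: nth_append)
  have "naddr \<delta> (t @ [i]) = concat (map (\<lambda>j. if is_ann \<delta> (take j (t @ [i])) then [(t @ [i]) ! j] else [])
      [0..<length t]) @ (if is_ann \<delta> t then [i] else [])"
    unfolding naddr_def by simp
  then show ?thesis unfolding e naddr_def .
qed

lemma naddr_prefix: "prefix (naddr \<delta> s) (naddr \<delta> (s @ w))"
proof (induction w rule: rev_induct)
  case (snoc x xs)
  then show ?case by (metis append.assoc naddr_snoc prefix_append)
qed simp

lemma naddr_replicate:
  "(\<forall>j<k. \<not> is_ann \<delta> (t @ replicate j 0)) \<Longrightarrow> naddr \<delta> (t @ replicate k 0) = naddr \<delta> t"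
proof (induction k)
  case (Suc k)
  have "t @ replicate (Suc k) 0 = (t @ replicate k 0) @ [0]" by (simp add: replicate_append_same[symmetric])
  then show ?case using Suc naddr_snoc[of \<delta> "t @ replicate k 0"] by simp
qed simp

lemma eff_eq:
  assumes "\<forall>j<k. is_struct \<delta> (t @ replicate j 0)" and "\<not> is_struct \<delta> (t @ replicate k 0)"
  shows "eff \<delta> t = t @ replicate k 0"
proof -
  have "(LEAST k. \<not> is_struct \<delta> (t @ replicate k 0)) = k"
    by (rule Least_equality) (use assms in \<open>auto simp: not_less[symmetric]\<close>)
  then show ?thesis by (simp add: eff_def)
qed

lemma eff_nonstruct: "\<not> is_struct \<delta> t \<Longrightarrow> eff \<delta> t = t"
  using eff_eq[of 0 \<delta> t] by simp

text \<open>Inverse of naddr on non-structural nodes: re-insert the structural chains that strip contracted.\<close>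

definition expand_addr :: "(nat list \<Rightarrow> ('s, 'c, 'x, 'a, 'r) rrule option) \<Rightarrow> nat list \<Rightarrow> nat list" where
  "expand_addr \<delta> u = fold (\<lambda>i d. eff \<delta> d @ [i]) u []"

lemma expand_addr_Nil [simp]: "expand_addr \<delta> [] = []"
  by (simp add: expand_addr_def)

lemma expand_addr_snoc [simp]: "expand_addr \<delta> (u @ [i]) = eff \<delta> (expand_addr \<delta> u) @ [i]"
  by (simp add: expand_addr_def)

context reset_proof_tree
begin

lemma structural_chain_in_T:
  assumes "t \<in> T" and "\<forall>i<j. is_struct \<delta> (t @ replicate i 0)"
  shows "t @ replicate j 0 \<in> T"
  using assms(2)
proof (induction j)
  case (Suc j)
  then have "t @ replicate j 0 \<in> T" "is_struct \<delta> (t @ replicate j 0)" by auto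
  then have "(t @ replicate j 0) @ [0] \<in> T" using struct_step(2) by blast
  then show ?case by (simp add: replicate_append_same[symmetric])
qed (use assms(1) in simp)

lemma eff_exists:
  assumes "t \<in> T"
  obtains k where "\<forall>j<k. is_struct \<delta> (t @ replicate j 0)" "\<not> is_struct \<delta> (t @ replicate k 0)"
proof -
  have "\<exists>k. \<not> is_struct \<delta> (t @ replicate k 0)"
  proof (rule ccontr)
    assume "\<nexists>k. \<not> is_struct \<delta> (t @ replicate k 0)"
    then have "range (\<lambda>j. t @ replicate j 0) \<subseteq> T" using structural_chain_in_T[OF assms] by auto
    moreover have "inj (\<lambda>j. t @ replicate j (0::nat))" by (rule injI) simp
    ultimately show False using finite_T finite_subset finite_imageD by (metis infinite_UNIV_nat)
  qed
  then show ?thesis using that exists_least_iff[of "\<lambda>k. \<not> is_struct \<delta> (t @ replicate k 0)"] by blast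
qed

lemma eff_props:
  assumes "t \<in> T"
  shows "eff \<delta> t \<in> T" and "\<not> is_struct \<delta> (eff \<delta> t)" and "naddr \<delta> (eff \<delta> t) = naddr \<delta> t"
    and "seq_of (eff \<delta> t) = seq_of t" and "prefix t (eff \<delta> t)"
proof -
  obtain k where k: "\<forall>j<k. is_struct \<delta> (t @ replicate j 0)" "\<not> is_struct \<delta> (t @ replicate k 0)"
    using eff_exists[OF assms] by blast
  have e: "eff \<delta> t = t @ replicate k 0" using eff_eq k by blast
  have "seq_of (t @ replicate j 0) = seq_of t" if "j \<le> k" for j
    using that
  proof (induction j)
    case (Suc j)
    then have "t @ replicate j 0 \<in> T" "is_struct \<delta> (t @ replicate j 0)"
      using k structural_chain_in_T[OF assms] by auto
    then have "seq_of ((t @ replicate j 0) @ [0]) = seq_of (t @ replicate j 0)" by (rule struct_step(3))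
    then show ?case using Suc by (simp add: replicate_append_same[symmetric])
  qed simp
  then show "eff \<delta> t \<in> T" "\<not> is_struct \<delta> (eff \<delta> t)" "naddr \<delta> (eff \<delta> t) = naddr \<delta> t"
    "seq_of (eff \<delta> t) = seq_of t" "prefix t (eff \<delta> t)"
    using k e naddr_replicate[of k \<delta> t] is_struct_not_ann structural_chain_in_T[OF assms] by auto
qed

lemma eff_struct_child:
  assumes "t \<in> T" and "is_struct \<delta> t"
  shows "eff \<delta> (t @ [0]) = eff \<delta> t"
proof -
  have "t @ [0] \<in> T" using struct_step(2) assms by blast
  then obtain k where k: "\<forall>j<k. is_struct \<delta> ((t @ [0]) @ replicate j 0)" "\<not> is_struct \<delta> ((t @ [0]) @ replicate k 0)"
    using eff_exists by blast
  have rs: "(t @ [0]) @ replicate j 0 = t @ replicate (Suc j) 0" for j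
    by (simp add: replicate_append_same[symmetric])
  have "\<forall>j<Suc k. is_struct \<delta> (t @ replicate j 0)"
    using k(1) assms(2) rs by (auto simp: less_Suc_eq_0_disj)
  then have "eff \<delta> t = t @ replicate (Suc k) 0" using eff_eq k(2) rs by metis
  moreover have "eff \<delta> (t @ [0]) = (t @ [0]) @ replicate k 0" using eff_eq k by blast
  ultimately show ?thesis using rs by simp
qed

lemma eff_in_NS: "t \<in> T \<Longrightarrow> eff \<delta> t \<in> NS T \<delta>"
  using eff_props by (simp add: NS_def)

lemma addr_decomposition:
  "t \<in> T \<Longrightarrow> \<exists>k. t = expand_addr \<delta> (naddr \<delta> t) @ replicate k 0 \<and>
     (\<forall>j<k. is_struct \<delta> (expand_addr \<delta> (naddr \<delta> t) @ replicate j 0))"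
proof (induction t rule: rev_induct)
  case (snoc i s)
  then have sT: "s \<in> T" using prefix_closed_T by blast
  with snoc.IH obtain k where k: "s = expand_addr \<delta> (naddr \<delta> s) @ replicate k 0"
    "\<forall>j<k. is_struct \<delta> (expand_addr \<delta> (naddr \<delta> s) @ replicate j 0)"
    by blast
  show ?case using sT
  proof (cases rule: node_cases)
    case (bud c)
    then show ?thesis using bud_props[OF sT] leaf_no_child snoc.prems by blast
  next
    case struct
    then have "i = 0" using struct_step(2) sT snoc.prems by blast
    moreover have "naddr \<delta> (s @ [i]) = naddr \<delta> s" using struct is_struct_not_ann by (simp add: naddr_snoc)
    ultimately show ?thesis using k struct
      by (intro exI[of _ "Suc k"]) (auto simp: less_Suc_eq replicate_append_same[symmetric])
  next
    case (ann R b bs)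
    then have a: "is_ann \<delta> s" by (simp add: is_ann_iff)
    then have "\<not> is_struct \<delta> (expand_addr \<delta> (naddr \<delta> s) @ replicate k 0)" using k(1) by (simp add: is_struct_def)
    then have "eff \<delta> (expand_addr \<delta> (naddr \<delta> s)) = s" using eff_eq k by metis
    then show ?thesis using a by (intro exI[of _ 0]) (simp add: naddr_snoc)
  qed
qed simp

lemma eff_expand_naddr: "t \<in> NS T \<delta> \<Longrightarrow> eff \<delta> (expand_addr \<delta> (naddr \<delta> t)) = t"
  using addr_decomposition eff_eq unfolding NS_def by (metis (mono_tags, lifting) mem_Collect_eq)

lemma naddr_inj_NS: "t1 \<in> NS T \<delta> \<Longrightarrow> t2 \<in> NS T \<delta> \<Longrightarrow> naddr \<delta> t1 = naddr \<delta> t2 \<Longrightarrow> t1 = t2"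
  using eff_expand_naddr by metis

lemma strip_node_naddr:
  assumes "t \<in> NS T \<delta>"
  shows "strip_node T \<delta> (naddr \<delta> t) = t"
proof -
  have "strip_node T \<delta> (naddr \<delta> t) \<in> NS T \<delta> \<and> naddr \<delta> (strip_node T \<delta> (naddr \<delta> t)) = naddr \<delta> t"
    unfolding strip_node_def by (rule someI[of _ t]) (use assms in auto)
  then show ?thesis using naddr_inj_NS assms by blast
qed

lemma strip_T_iff: "u \<in> strip_T T \<delta> \<longleftrightarrow> (\<exists>t\<in>NS T \<delta>. naddr \<delta> t = u)"
  by (auto simp: strip_T_def)

lemma strip_node_props:
  assumes "u \<in> strip_T T \<delta>"
  shows "strip_node T \<delta> u \<in> NS T \<delta>" and "naddr \<delta> (strip_node T \<delta> u) = u"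
  using assms strip_node_naddr by (auto simp: strip_T_def)

lemma strip_T_prefix: "t \<in> T \<Longrightarrow> prefix u (naddr \<delta> t) \<Longrightarrow> u \<in> strip_T T \<delta>"
proof (induction t arbitrary: u rule: rev_induct)
  case Nil
  then show ?case using eff_in_NS[OF root_in_T] eff_props(3)[OF root_in_T] strip_T_iff by auto
next
  case (snoc i s)
  show ?case
  proof (cases "prefix u (naddr \<delta> s)")
    case True
    then show ?thesis using snoc prefix_closed_T by blast
  next
    case False
    with snoc.prems have "u = naddr \<delta> (s @ [i])"
      by (auto simp: naddr_snoc split: if_splits)
    then show ?thesis using eff_in_NS eff_props(3) snoc.prems(1) strip_T_iff by metis
  qed
qed

lemma strip_T_child:
  assumes "u @ [i] \<in> strip_T T \<delta>"
  shows "u \<in> strip_T T \<delta>" and "strip_node T \<delta> u @ [i] \<in> T" and "is_ann \<delta> (strip_node T \<delta> u)"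
proof -
  obtain t' where t': "t' \<in> NS T \<delta>" "naddr \<delta> t' = u @ [i]" using assms strip_T_iff by blast
  then have t'T: "t' \<in> T" by (simp add: NS_def)
  show uS: "u \<in> strip_T T \<delta>" using strip_T_prefix[OF t'T] t' by simp
  obtain k where "t' = expand_addr \<delta> (u @ [i]) @ replicate k 0" using addr_decomposition[OF t'T] t' by auto
  then have "eff \<delta> (expand_addr \<delta> u) @ [i] \<in> T" using t'T prefix_closed_T by (metis expand_addr_snoc)
  moreover have "eff \<delta> (expand_addr \<delta> u) = strip_node T \<delta> u"
    using eff_expand_naddr[OF strip_node_props(1)[OF uS]] strip_node_props(2)[OF uS] by simp
  ultimately show c: "strip_node T \<delta> u @ [i] \<in> T" by simp
  have snT: "strip_node T \<delta> u \<in> T" "\<not> is_struct \<delta> (strip_node T \<delta> u)"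
    using strip_node_props(1)[OF uS] by (auto simp: NS_def)
  show "is_ann \<delta> (strip_node T \<delta> u)"
    using snT(1)
  proof (cases rule: node_cases)
    case (bud c')
    then show ?thesis using bud_props[OF snT(1)] leaf_no_child c by blast
  qed (use snT in \<open>auto simp: is_ann_iff\<close>)
qed

lemma ann_child_strip:
  assumes "t \<in> NS T \<delta>" and "is_ann \<delta> t" and "t @ [i] \<in> T"
  shows "naddr \<delta> t @ [i] \<in> strip_T T \<delta>" and "strip_node T \<delta> (naddr \<delta> t @ [i]) = eff \<delta> (t @ [i])"
proof -
  have "naddr \<delta> (eff \<delta> (t @ [i])) = naddr \<delta> t @ [i]"
    using eff_props(3)[OF assms(3)] assms(2) by (simp add: naddr_snoc)
  then show "naddr \<delta> t @ [i] \<in> strip_T T \<delta>" "strip_node T \<delta> (naddr \<delta> t @ [i]) = eff \<delta> (t @ [i])"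
    using eff_in_NS[OF assms(3)] strip_node_naddr strip_T_iff by metis+
qed

end

context reset_proof_tree
begin

lemma bud_invariant:
  assumes "t \<in> T" and "\<beta> t = Some c"
  shows "\<exists>\<theta>. \<theta> \<noteq> [] \<and> (\<forall>q\<in>set (path_nodes t c). prefix \<theta> (ctrl_of q)) \<and>
    (\<exists>p\<in>set (path_nodes t c). \<exists>\<Gamma> b b'. \<delta> p = Some (RReset \<Gamma> (last \<theta>) b b'))"
proof -
  have "has_invariant \<beta> lab \<delta> t" using is_reset_proof assms unfolding reset_proof_def by blast
  then have "\<exists>\<theta>. \<theta> \<noteq> [] \<and> prefix \<theta> (lcp (map ctrl_of (path_nodes t c))) \<and>
      (\<exists>p\<in>set (path_nodes t c). \<exists>\<Gamma> b b'. \<delta> p = Some (RReset \<Gamma> (last \<theta>) b b'))"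
    using assms(2) unfolding has_invariant_def Let_def by simp
  moreover have "prefix (lcp (map ctrl_of (path_nodes t c))) (ctrl_of q)" if "q \<in> set (path_nodes t c)" for q
    by (rule lcp_prefix) (simp add: that)
  ultimately show ?thesis by (meson prefix_order.order_trans)
qed

lemma structural_chain_dominated:
  assumes "c @ replicate k 0 \<in> T" and "\<forall>j<k. is_struct \<delta> (c @ replicate j 0)"
    and "j1 \<le> j2" and "j2 \<le> k"
  shows "board_dominated (board_of (c @ replicate j2 0)) (board_of (c @ replicate j1 0))"
  using assms(3,4)
proof (induction j2)
  case (Suc j2)
  show ?case
  proof (cases "j1 = Suc j2")
    case False
    then have j: "j1 \<le> j2" "j2 < k" using Suc.prems by auto
    have "c @ replicate k 0 = (c @ replicate j2 0) @ replicate (k - j2) 0"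
      using j(2) by (simp add: replicate_add[symmetric])
    then have "c @ replicate j2 0 \<in> T" using assms(1) prefix_closed_T by metis
    then have "board_dominated (board_of ((c @ replicate j2 0) @ [0])) (board_of (c @ replicate j2 0))"
      using struct_step(5) assms(2) j(2) by blast
    moreover have "board_dominated (board_of (c @ replicate j2 0)) (board_of (c @ replicate j1 0))"
      using Suc.IH j by simp
    ultimately show ?thesis
      using board_dominated_trans by (simp add: replicate_append_same[symmetric])
  qed (simp add: board_dominated_refl)
qed (simp add: board_dominated_refl)

text \<open>The invariant places a reset on the path from the companion to the bud, and boards that only
  shrink along structural steps can never undo a reset.\<close>

lemma bud_not_structural_chain:
  assumes tT: "t \<in> T" and bt: "\<beta> t = Some c" and st: "\<forall>j<k. is_struct \<delta> (c @ replicate j 0)"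
  shows "t \<noteq> c @ replicate k 0"
proof
  assume tk: "t = c @ replicate k 0"
  obtain \<theta> p \<Gamma> b b' where "p \<in> set (path_nodes t c)" and p: "\<delta> p = Some (RReset \<Gamma> (last \<theta>) b b')"
    using bud_invariant[OF tT bt] by blast
  then obtain l where l: "length c \<le> l" "l \<le> length t" "p = take l t"
    by (auto simp: set_path_nodes)
  define j where "j = l - length c"
  have pj: "p = c @ replicate j 0" using l tk by (simp add: j_def)
  have "\<delta> t = None" using bud_props[OF tT bt] by blast
  then have "j \<noteq> k" using pj tk p by auto
  then have jk: "j < k" using l tk j_def by auto
  have pT: "p \<in> T" using tT l(3) prefix_closed_T by (metis append_take_drop_id)
  have r: "board_of p = b" "board_of (p @ [0]) = b'" "reset_succ (last \<theta>) b b'"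
    using reset_step[OF pT p] by auto
  have "board_dominated (board_of (c @ replicate k 0)) (board_of (c @ replicate (Suc j) 0))"
    using structural_chain_dominated[of c k "Suc j" k] tT tk st jk by simp
  moreover have "board_dominated (board_of (c @ replicate j 0)) (board_of (c @ replicate 0 0))"
    using structural_chain_dominated[of c k 0 j] tT tk st jk by simp
  moreover have "board_of (c @ replicate 0 0) = board_of (c @ replicate k 0)"
    using bud_props[OF tT bt] tk by simp
  ultimately have "board_dominated (board_of (c @ replicate j 0)) (board_of (c @ replicate (Suc j) 0))"
    using board_dominated_trans by metis
  then have "board_dominated b b'" using r pj by (simp add: replicate_append_same[symmetric])
  then show False using reset_succ_not_dominated[OF r(3)] lab_well_formed[OF pT] r(1) by auto
qed

lemma eff_companion_strict_prefix:
  assumes tT: "t \<in> T" and bt: "\<beta> t = Some c"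
  shows "strict_prefix (eff \<delta> c) t"
proof -
  have bp: "leaf T t" "c \<in> T" "strict_prefix c t" "\<delta> t = None"
    using bud_props[OF tT bt] by auto
  obtain k where k: "\<forall>j<k. is_struct \<delta> (c @ replicate j 0)" "\<not> is_struct \<delta> (c @ replicate k 0)"
    using eff_exists[OF bp(2)] by blast
  have tns: "\<not> is_struct \<delta> t" using bp by (simp add: is_struct_def)
  have "prefix (c @ replicate j 0) t" if "j \<le> k" for j
    using that
  proof (induction j)
    case (Suc j)
    then have pj: "prefix (c @ replicate j 0) t" and sj: "is_struct \<delta> (c @ replicate j 0)" using k by auto
    then have "c @ replicate j 0 \<noteq> t" using tns by auto
    moreover from pj obtain w0 where "t = (c @ replicate j 0) @ w0" by (auto simp: prefix_def)
    ultimately obtain i w where w: "t = ((c @ replicate j 0) @ [i]) @ w" by (cases w0) auto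
    then have "(c @ replicate j 0) @ [i] \<in> T" using tT prefix_closed_T by blast
    then have "i = 0" using struct_step(2)[OF _ sj] prefix_closed_T by blast
    then show ?case using w by (simp add: replicate_append_same[symmetric])
  qed (use bp in \<open>simp add: strict_prefix_def\<close>)
  then have "prefix (eff \<delta> c) t" using eff_eq[OF k] by simp
  moreover have "eff \<delta> c \<noteq> t" using bud_not_structural_chain[OF tT bt k(1)] eff_eq[OF k] by simp
  ultimately show ?thesis by (simp add: strict_prefix_def)
qed

end

context reset_proof_tree
begin

section \<open>The stripped preproof\<close>

lemma strip_beta_SomeE:
  assumes "strip_beta T \<beta> \<delta> u = Some c'"
  obtains t c where "u \<in> strip_T T \<delta>" "t = strip_node T \<delta> u" "t \<in> NS T \<delta>" "naddr \<delta> t = u"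
    "\<beta> t = Some c" "c' = naddr \<delta> (eff \<delta> c)"
  using assms strip_node_props unfolding strip_beta_def by (auto split: if_splits)

lemma strip_beta_naddr:
  "t \<in> NS T \<delta> \<Longrightarrow> strip_beta T \<beta> \<delta> (naddr \<delta> t) = map_option (\<lambda>c. naddr \<delta> (eff \<delta> c)) (\<beta> t)"
  using strip_node_naddr strip_T_iff unfolding strip_beta_def by auto

lemma strip_leaf_of_bud:
  assumes "t \<in> NS T \<delta>" and "\<beta> t = Some c"
  shows "leaf (strip_T T \<delta>) (naddr \<delta> t)"
proof -
  have "naddr \<delta> t @ [i] \<notin> strip_T T \<delta>" for i
  proof
    assume "naddr \<delta> t @ [i] \<in> strip_T T \<delta>"
    then have "is_ann \<delta> t" using strip_T_child(3) strip_node_naddr[OF assms(1)] by metis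
    moreover have "\<delta> t = None" using bud_props assms by (auto simp: NS_def)
    ultimately show False by (simp add: is_ann_def)
  qed
  then show ?thesis by (auto simp: leaf_def Chld_def)
qed

lemma strip_companion:
  assumes "t \<in> NS T \<delta>" and "\<beta> t = Some c"
  shows "naddr \<delta> (eff \<delta> c) \<in> strip_T T \<delta>" and "\<not> leaf (strip_T T \<delta>) (naddr \<delta> (eff \<delta> c))"
    and "strict_prefix (naddr \<delta> (eff \<delta> c)) (naddr \<delta> t)"
proof -
  have tT: "t \<in> T" using assms(1) by (simp add: NS_def)
  define e where "e = eff \<delta> c"
  have cT: "c \<in> T" using bud_props[OF tT assms(2)] by blast
  have eT: "e \<in> T" "e \<in> NS T \<delta>" using eff_props(1) eff_in_NS cT e_def by auto
  then show "naddr \<delta> (eff \<delta> c) \<in> strip_T T \<delta>" using strip_T_iff e_def by blast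
  obtain w0 where "t = e @ w0" "w0 \<noteq> []"
    using eff_companion_strict_prefix[OF tT assms(2)] e_def by (auto simp: strict_prefix_def prefix_def)
  then obtain i w where tw: "t = (e @ [i]) @ w" by (cases w0) auto
  have eiT: "e @ [i] \<in> T" using tT tw prefix_closed_T by blast
  have ea: "is_ann \<delta> e"
    using eT(1)
  proof (cases rule: node_cases)
    case (bud c')
    then show ?thesis using bud_props[OF eT(1)] leaf_no_child eiT by blast
  qed (use eT in \<open>auto simp: NS_def is_ann_iff\<close>)
  have ch: "naddr \<delta> e @ [i] \<in> strip_T T \<delta>" using ann_child_strip(1)[OF eT(2) ea eiT] .
  then show "\<not> leaf (strip_T T \<delta>) (naddr \<delta> (eff \<delta> c))" using e_def by (auto simp: leaf_def Chld_def)
  have "prefix (naddr \<delta> (e @ [i])) (naddr \<delta> t)" using naddr_prefix tw by metis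
  then have "prefix (naddr \<delta> e @ [i]) (naddr \<delta> t)" using ea by (simp add: naddr_snoc)
  then show "strict_prefix (naddr \<delta> (eff \<delta> c)) (naddr \<delta> t)"
    using e_def prefix_order.less_le_trans[of "naddr \<delta> e" "naddr \<delta> e @ [i]"] by (simp add: strict_prefix_def)
qed

lemma strip_cyclic_tree: "cyclic_tree (strip_T T \<delta>) (strip_beta T \<beta> \<delta>)"
proof -
  have fin: "finite (strip_T T \<delta>)" unfolding strip_T_def NS_def using finite_T by simp
  have root: "[] \<in> strip_T T \<delta>" using strip_T_prefix[OF root_in_T] by simp
  have closed: "\<forall>t u. t @ u \<in> strip_T T \<delta> \<longrightarrow> t \<in> strip_T T \<delta>"
  proof (intro allI impI)
    fix t u assume "t @ u \<in> strip_T T \<delta>"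
    then obtain s where "s \<in> NS T \<delta>" "naddr \<delta> s = t @ u" using strip_T_iff by blast
    moreover have "prefix t (t @ u)" by simp
    ultimately show "t \<in> strip_T T \<delta>" using strip_T_prefix by (auto simp: NS_def)
  qed
  have buds: "\<forall>u\<in>strip_T T \<delta>. \<forall>c'. strip_beta T \<beta> \<delta> u = Some c' \<longrightarrow>
      leaf (strip_T T \<delta>) u \<and> c' \<in> strip_T T \<delta> \<and> \<not> leaf (strip_T T \<delta>) c' \<and> strict_prefix c' u"
  proof (intro ballI allI impI)
    fix u c' assume "strip_beta T \<beta> \<delta> u = Some c'"
    then obtain t c where t: "t \<in> NS T \<delta>" "naddr \<delta> t = u" "\<beta> t = Some c" "c' = naddr \<delta> (eff \<delta> c)"
      by (rule strip_beta_SomeE)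
    show "leaf (strip_T T \<delta>) u \<and> c' \<in> strip_T T \<delta> \<and> \<not> leaf (strip_T T \<delta>) c' \<and> strict_prefix c' u"
      unfolding t(2)[symmetric] t(4) using strip_leaf_of_bud[OF t(1,3)] strip_companion[OF t(1,3)] by blast
  qed
  show ?thesis unfolding cyclic_tree_def is_tree_def using fin root closed buds by blast
qed

lemma strip_lab_naddr: "t \<in> NS T \<delta> \<Longrightarrow> strip_lab T \<delta> lab (naddr \<delta> t) = seq_of t"
  by (simp add: strip_lab_def strip_node_naddr)

lemma strip_node_ann:
  assumes "u \<in> strip_T T \<delta>" and "strip_beta T \<beta> \<delta> u = None"
  obtains R b bs where "\<delta> (strip_node T \<delta> u) = Some (RAnn R b bs)" and "strip_delta T \<delta> u = Some R"
proof -
  define t where "t = strip_node T \<delta> u"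
  have t: "t \<in> NS T \<delta>" "naddr \<delta> t = u" using strip_node_props[OF assms(1)] t_def by auto
  have bN: "\<beta> t = None" using assms t_def unfolding strip_beta_def by simp
  have tT: "t \<in> T" using t by (simp add: NS_def)
  show ?thesis
    using tT
  proof (cases rule: node_cases)
    case (ann R b bs)
    then show ?thesis using that assms(1) t_def by (simp add: strip_delta_def)
  qed (use bN t in \<open>auto simp: NS_def\<close>)
qed

lemma strip_assumption_free: "assumption_free (strip_T T \<delta>) (strip_beta T \<beta> \<delta>) (strip_delta T \<delta>)"
  unfolding assumption_free_def by (metis option.distinct(1) strip_node_ann)

lemma strip_lab_root: "strip_lab T \<delta> lab [] = seq_of []"
  using strip_lab_naddr[OF eff_in_NS[OF root_in_T]] eff_props[OF root_in_T] by simp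

end

context reset_proof_tree
begin

lemma strip_rule_step:
  assumes "u \<in> strip_T T \<delta>" and "strip_delta T \<delta> u = Some R" and "\<delta> (strip_node T \<delta> u) = Some (RAnn R b bs)"
  shows "R \<in> Rl" and "concl R = strip_lab T \<delta> lab u"
    and "Chld (strip_T T \<delta>) u = {u @ [i] | i. i < length (prems R)}"
    and "i < length (prems R) \<Longrightarrow> strip_lab T \<delta> lab (u @ [i]) = prems R ! i"
proof -
  define t where "t = strip_node T \<delta> u"
  have t: "t \<in> NS T \<delta>" "naddr \<delta> t = u" using strip_node_props[OF assms(1)] t_def by auto
  have tT: "t \<in> T" using t by (simp add: NS_def)
  have ta: "is_ann \<delta> t" using assms(3) t_def by (simp add: is_ann_iff)
  note ap = ann_step[OF tT assms(3)[folded t_def]]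
  show "R \<in> Rl" by (rule ap(2))
  show "concl R = strip_lab T \<delta> lab u" using strip_lab_naddr[OF t(1)] t(2) ap(3) by simp
  have "u @ [i] \<in> strip_T T \<delta> \<longleftrightarrow> i < length (prems R)" for i
    using strip_T_child(2)[of u i] ann_child_strip(1)[OF t(1) ta, of i] ap(5)[of i] t(2) t_def by auto
  then show "Chld (strip_T T \<delta>) u = {u @ [i] | i. i < length (prems R)}"
    unfolding Chld_def by blast
  assume i: "i < length (prems R)"
  then have iT: "t @ [i] \<in> T" using ap(5) by blast
  have "strip_node T \<delta> (u @ [i]) = eff \<delta> (t @ [i])" using ann_child_strip(2)[OF t(1) ta iT] t(2) by simp
  then have "strip_lab T \<delta> lab (u @ [i]) = seq_of (t @ [i])" using eff_props(4)[OF iT] by (simp add: strip_lab_def)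
  then show "strip_lab T \<delta> lab (u @ [i]) = prems R ! i" using ap(6)[OF i] by simp
qed

lemma strip_preproof:
  "preproof Seq Rl concl prems (strip_T T \<delta>) (strip_beta T \<beta> \<delta>) (strip_lab T \<delta> lab) (strip_delta T \<delta>)"
  unfolding preproof_def
proof (intro conjI ballI allI impI)
  show "cyclic_tree (strip_T T \<delta>) (strip_beta T \<beta> \<delta>)" by (rule strip_cyclic_tree)
next
  fix u assume "u \<in> strip_T T \<delta>"
  then show "strip_lab T \<delta> lab u \<in> Seq"
    using lab_well_formed strip_node_props(1) by (simp add: strip_lab_def NS_def)
next
  fix u c' assume "strip_beta T \<beta> \<delta> u = Some c'"
  then obtain t c where t: "t \<in> NS T \<delta>" "naddr \<delta> t = u" "\<beta> t = Some c" "c' = naddr \<delta> (eff \<delta> c)"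
    by (rule strip_beta_SomeE)
  have tT: "t \<in> T" using t(1) by (simp add: NS_def)
  have c: "c \<in> T" "lab t = lab c" using bud_props[OF tT t(3)] by auto
  show "strip_lab T \<delta> lab u = strip_lab T \<delta> lab c'"
    using strip_lab_naddr[OF t(1)] strip_lab_naddr[OF eff_in_NS[OF c(1)]] eff_props(4)[OF c(1)] t(2,4) c(2)
    by simp
next
  fix u assume "u \<in> strip_T T \<delta>" "strip_beta T \<beta> \<delta> u \<noteq> None"
  then obtain t c where "t \<in> NS T \<delta>" "u = naddr \<delta> t" "\<beta> t = Some c"
    by (metis option.exhaust strip_beta_SomeE)
  then show "strip_delta T \<delta> u = None"
    using bud_props[of t c] strip_node_naddr strip_T_iff by (auto simp: strip_delta_def NS_def)
next
  fix u assume u: "u \<in> strip_T T \<delta>" "strip_beta T \<beta> \<delta> u = None"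
  then obtain R b bs where "\<delta> (strip_node T \<delta> u) = Some (RAnn R b bs)" "strip_delta T \<delta> u = Some R"
    by (rule strip_node_ann)
  then show "case strip_delta T \<delta> u of None \<Rightarrow> leaf (strip_T T \<delta>) u
      | Some R \<Rightarrow> R \<in> Rl \<and> concl R = strip_lab T \<delta> lab u \<and>
          Chld (strip_T T \<delta>) u = {u @ [i] | i. i < length (prems R)} \<and>
          (\<forall>i < length (prems R). strip_lab T \<delta> lab (u @ [i]) = prems R ! i)"
    using strip_rule_step[OF u(1)] by simp
qed

end

section \<open>Recurrent nodes of an infinite path\<close>

context reset_proof_tree
begin

definition invariant_of :: "nat list \<Rightarrow> 'c list" where
  "invariant_of t = (SOME \<theta>. \<theta> \<noteq> [] \<and> (\<forall>q\<in>set (path_nodes t (the (\<beta> t))). prefix \<theta> (ctrl_of q)) \<and>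
     (\<exists>p\<in>set (path_nodes t (the (\<beta> t))). \<exists>\<Gamma> b b'. \<delta> p = Some (RReset \<Gamma> (last \<theta>) b b')))"

lemma invariant_of_props:
  assumes "t \<in> T" and "\<beta> t = Some c"
  shows "invariant_of t \<noteq> []" and "\<And>q. q \<in> set (path_nodes t c) \<Longrightarrow> prefix (invariant_of t) (ctrl_of q)"
    and "\<exists>p\<in>set (path_nodes t c). \<exists>\<Gamma> b b'. \<delta> p = Some (RReset \<Gamma> (last (invariant_of t)) b b')"
  using someI_ex[OF bud_invariant[OF assms]] assms(2) unfolding invariant_of_def by auto

end

locale recurrent_path = reset_proof_tree \<alpha> Seq Rl concl prems iobj imor T \<beta> lab \<delta>
  for \<alpha> :: "'a::{finite, bounded_semilattice_sup_bot}"
    and Seq :: "'s set" and Rl :: "'r set"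
    and concl :: "'r \<Rightarrow> 's" and prems :: "'r \<Rightarrow> 's list"
    and iobj :: "'s \<Rightarrow> 'x set" and imor :: "'r \<Rightarrow> ('x \<times> 'a \<times> 'x) set list"
    and T :: "nat list set" and \<beta> :: "nat list \<Rightarrow> nat list option"
    and lab :: "nat list \<Rightarrow> 's \<times> ('c, 'x, 'a) board"
    and \<delta> :: "nat list \<Rightarrow> ('s, 'c, 'x, 'a, 'r) rrule option" +
  fixes ob :: "nat \<Rightarrow> nat list"
  assumes path_in_T: "ob n \<in> T"
    and path_step: "\<beta> (ob n) = Some (ob (Suc n)) \<or> (\<beta> (ob n) = None \<and> (\<exists>j. ob (Suc n) = ob n @ [j]))"
begin

lemma path_step_cases:
  obtains (jump) "\<beta> (ob n) = Some (ob (Suc n))" "strict_prefix (ob (Suc n)) (ob n)"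
  | (child) j where "ob (Suc n) = ob n @ [j]"
  using path_step[of n] bud_props[OF path_in_T] by blast

definition recurrent :: "nat list \<Rightarrow> bool" where
  "recurrent u \<longleftrightarrow> infinite {n. ob n = u}"

lemma recurrent_visited: "recurrent u \<Longrightarrow> \<exists>n\<ge>K. ob n = u"
  unfolding recurrent_def infinite_nat_iff_unbounded_le by auto

lemma recurrent_in_T: "recurrent u \<Longrightarrow> u \<in> T"
  using recurrent_visited path_in_T by blast

lemma eventually_recurrent: "\<exists>n1. \<forall>n\<ge>n1. recurrent (ob n)"
proof -
  have "finite (\<Union>u\<in>{u\<in>T. \<not> recurrent u}. {n. ob n = u})"
    using finite_T unfolding recurrent_def by auto
  then obtain n1 where n1: "\<forall>n\<in>(\<Union>u\<in>{u\<in>T. \<not> recurrent u}. {n. ob n = u}). n < n1"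
    using finite_nat_set_iff_bounded by blast
  have "recurrent (ob n)" if "n \<ge> n1" for n
    using n1 that path_in_T[of n] by force
  then show ?thesis by blast
qed

lemma recurrent_companion:
  assumes "recurrent t" and "\<beta> t = Some c"
  shows "recurrent c"
proof -
  have "Suc ` {n. ob n = t} \<subseteq> {n. ob n = c}"
    using path_step assms(2) by (auto, metis option.inject option.simps(3))
  moreover have "infinite (Suc ` {n. ob n = t})"
    using assms(1) finite_imageD inj_Suc unfolding recurrent_def by blast
  ultimately show ?thesis unfolding recurrent_def using infinite_super by blast
qed

lemma path_visits_between:
  assumes "ob v = w" and "v \<le> n"
  shows "prefix w q \<Longrightarrow> prefix q (ob n) \<Longrightarrow> \<exists>n'. v \<le> n' \<and> n' \<le> n \<and> ob n' = q"
  using assms(2)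
proof (induction n arbitrary: q rule: dec_induct)
  case base
  then have "q = w" using assms(1) prefix_order.antisym by blast
  then show ?case using assms(1) by blast
next
  case (step m)
  have IH: "\<exists>n'. v \<le> n' \<and> n' \<le> Suc m \<and> ob n' = q" if "prefix q (ob m)"
    using step.IH[OF step.prems(1) that] le_SucI by blast
  show ?case
  proof (cases m rule: path_step_cases)
    case jump
    then show ?thesis using IH step.prems by (simp add: strict_prefix_def prefix_order.order_trans)
  next
    case (child j)
    then have "q = ob (Suc m) \<or> prefix q (ob m)" using step.prems by (simp add: prefix_snoc)
    then show ?thesis using IH step.hyps by (metis le_SucI order_refl)
  qed
qed

definition base :: "nat list" where
  "base = (ARG_MIN length u. recurrent u)"

lemma recurrent_base: "recurrent base" and base_shortest: "recurrent u \<Longrightarrow> length base \<le> length u"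
proof -
  obtain n1 where "\<forall>n\<ge>n1. recurrent (ob n)" using eventually_recurrent by blast
  then have "recurrent (ob n1)" by blast
  then have "recurrent base \<and> (\<forall>u. recurrent u \<longrightarrow> length base \<le> length u)"
    unfolding base_def by (rule arg_min_nat_lemma)
  then show "recurrent base" "recurrent u \<Longrightarrow> length base \<le> length u" by auto
qed

lemma path_extends_base: "\<exists>nb. \<forall>m\<ge>nb. prefix base (ob m)"
proof -
  obtain n1 where n1: "\<forall>n\<ge>n1. recurrent (ob n)" using eventually_recurrent by blast
  obtain nb where nb: "nb \<ge> n1" "ob nb = base" using recurrent_visited[OF recurrent_base] by blast
  have "prefix base (ob m)" if "m \<ge> nb" for m
    using that
  proof (induction m rule: dec_induct)
    case (step m)
    show ?case
    proof (cases m rule: path_step_cases)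
      case jump
      then have "length base \<le> length (ob (Suc m))" using base_shortest n1 step.hyps nb(1) by simp
      then show ?thesis
        using prefix_length_prefix[OF step.IH] jump(2) by (simp add: strict_prefix_def)
    qed (use step.IH in simp)
  qed (use nb in simp)
  then show ?thesis by blast
qed

lemma recurrent_extends_base: "recurrent u \<Longrightarrow> prefix base u"
  using path_extends_base recurrent_visited by (metis le_trans nat_le_linear)

lemma recurrent_below_bud:
  assumes "recurrent u" and "u \<noteq> base"
  obtains t c where "recurrent t" "\<beta> t = Some c" "strict_prefix c u" "prefix u t"
proof -
  obtain n1 where n1: "\<forall>n\<ge>n1. recurrent (ob n)" using eventually_recurrent by blast
  obtain n where n: "n \<ge> n1" "ob n = u" using recurrent_visited[OF assms(1)] by blast
  obtain m' where m': "m' \<ge> n" "ob m' = base" using recurrent_visited[OF recurrent_base] by blast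
  have "strict_prefix base u" using recurrent_extends_base[OF assms(1)] assms(2) by (simp add: strict_prefix_def)
  then have "\<not> prefix u (ob m')" using m' by (auto simp: strict_prefix_def dest: prefix_order.antisym)
  then obtain m0 where m0: "n \<le> m0" "\<not> prefix u (ob m0)" "\<forall>m. n \<le> m \<and> m < m0 \<longrightarrow> prefix u (ob m)"
    using exists_least_iff[of "\<lambda>m. n \<le> m \<and> \<not> prefix u (ob m)"] m'(1) by (metis not_less)
  then obtain m1 where m1: "m0 = Suc m1" "n \<le> m1" using n(2) by (cases m0) (auto simp: le_Suc_eq)
  have pm1: "prefix u (ob m1)" using m0(3) m1 by simp
  show ?thesis
  proof (cases m1 rule: path_step_cases)
    case jump
    then have "prefix (ob m0) u \<or> prefix u (ob m0)"
      using prefix_same_cases[OF pm1] m1 by (auto simp: strict_prefix_def)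
    then have "strict_prefix (ob m0) u" using m0(2) by (auto simp: strict_prefix_def)
    moreover have "recurrent (ob m1)" using n1 n(1) m1(2) by simp
    ultimately show ?thesis using that[of "ob m1" "ob (Suc m1)"] jump pm1 m1 by simp
  next
    case (child j)
    then show ?thesis using pm1 m0(2) m1 by simp
  qed
qed

lemma recurrent_bud_exists: "\<exists>t. recurrent t \<and> \<beta> t \<noteq> None"
proof -
  obtain n1 where n1: "\<forall>n\<ge>n1. recurrent (ob n)" using eventually_recurrent by blast
  obtain n where n: "n \<ge> n1" "ob n = base" using recurrent_visited[OF recurrent_base] by blast
  have "ob (Suc n) \<noteq> base"
    by (cases n rule: path_step_cases) (use n in \<open>auto simp: strict_prefix_def\<close>)
  then obtain t c where "recurrent t" "\<beta> t = Some c"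
    using recurrent_below_bud n1 n(1) by (metis le_SucI)
  then show ?thesis by blast
qed

definition min_bud :: "nat list" where
  "min_bud = (ARG_MIN (\<lambda>t. length (invariant_of t)) t. recurrent t \<and> \<beta> t \<noteq> None)"

lemma min_bud_props:
  shows "recurrent min_bud" and "\<beta> min_bud \<noteq> None"
    and "\<And>t. recurrent t \<Longrightarrow> \<beta> t \<noteq> None \<Longrightarrow> length (invariant_of min_bud) \<le> length (invariant_of t)"
proof -
  obtain t0 where "recurrent t0 \<and> \<beta> t0 \<noteq> None" using recurrent_bud_exists by blast
  then have "(recurrent min_bud \<and> \<beta> min_bud \<noteq> None) \<and> (\<forall>t. recurrent t \<and> \<beta> t \<noteq> None \<longrightarrow>
      length (invariant_of min_bud) \<le> length (invariant_of t))"
    unfolding min_bud_def by (rule arg_min_nat_lemma)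
  then show "recurrent min_bud" "\<beta> min_bud \<noteq> None"
    "\<And>t. recurrent t \<Longrightarrow> \<beta> t \<noteq> None \<Longrightarrow> length (invariant_of min_bud) \<le> length (invariant_of t)"
    by auto
qed

text \<open>Induction along recurrent_below_bud: each recurrent node lies on the path of a recurrent bud, and
  the invariant of that bud is at least as long as the one of min_bud.\<close>

lemma recurrent_control_prefix:
  assumes "recurrent u"
  shows "take (length (invariant_of min_bud)) (ctrl_of u) = take (length (invariant_of min_bud)) (ctrl_of base)"
  using assms
proof (induction "length u" arbitrary: u rule: less_induct)
  case less
  show ?case
  proof (cases "u = base")
    case False
    then obtain t c where tc: "recurrent t" "\<beta> t = Some c" "strict_prefix c u" "prefix u t"
      using recurrent_below_bud less.prems by blast
    have tT: "t \<in> T" using recurrent_in_T tc(1) by blast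
    have IH: "take (length (invariant_of min_bud)) (ctrl_of c) = take (length (invariant_of min_bud)) (ctrl_of base)"
      using less.hyps[of c] recurrent_companion[OF tc(1,2)] prefix_length_less[OF tc(3)] by blast
    have "c \<in> set (path_nodes t c)" "u \<in> set (path_nodes t c)"
      using prefix_in_path_nodes tc(3,4) by (auto simp: strict_prefix_def intro: prefix_order.order_trans)
    then have "prefix (invariant_of t) (ctrl_of u)" "prefix (invariant_of t) (ctrl_of c)"
      using invariant_of_props(2)[OF tT tc(2)] by auto
    moreover have "length (invariant_of min_bud) \<le> length (invariant_of t)"
      using min_bud_props(3) tc(1,2) by simp
    ultimately have "take (length (invariant_of min_bud)) (ctrl_of u) = take (length (invariant_of min_bud)) (ctrl_of c)"
      using take_prefix by metis
    then show ?thesis using IH by simp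
  qed simp
qed

definition reset_chip :: 'c where
  "reset_chip = last (invariant_of min_bud)"

lemma reset_chip_eventually_in_control: "\<exists>n1. \<forall>n\<ge>n1. reset_chip \<in> set (ctrl_of (ob n))"
proof -
  obtain cs where cs: "\<beta> min_bud = Some cs" using min_bud_props(2) by blast
  have tT: "min_bud \<in> T" using recurrent_in_T min_bud_props(1) by blast
  have "cs \<in> set (path_nodes min_bud cs)"
    using bud_props[OF tT cs] prefix_in_path_nodes[of cs cs min_bud] by (simp add: strict_prefix_def)
  then have "prefix (invariant_of min_bud) (ctrl_of cs)" using invariant_of_props(2)[OF tT cs] by blast
  then have inv: "invariant_of min_bud = take (length (invariant_of min_bud)) (ctrl_of base)"
    using recurrent_control_prefix[OF recurrent_companion[OF min_bud_props(1) cs]]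
    by (metis append_eq_conv_conj prefix_def)
  have "reset_chip \<in> set (ctrl_of u)" if "recurrent u" for u
  proof -
    have "reset_chip \<in> set (take (length (invariant_of min_bud)) (ctrl_of u))"
      using recurrent_control_prefix[OF that] inv invariant_of_props(1)[OF tT cs]
      unfolding reset_chip_def by (metis last_in_set)
    then show ?thesis using in_set_takeD by fast
  qed
  then show ?thesis using eventually_recurrent by blast
qed

lemma reset_chip_reset_infinitely: "\<exists>r\<ge>K. \<exists>\<Gamma> b b'. \<delta> (ob r) = Some (RReset \<Gamma> reset_chip b b')"
proof -
  obtain cs where cs: "\<beta> min_bud = Some cs" using min_bud_props(2) by blast
  have tT: "min_bud \<in> T" using recurrent_in_T min_bud_props(1) by blast
  obtain p \<Gamma> b b' where p: "p \<in> set (path_nodes min_bud cs)" "\<delta> p = Some (RReset \<Gamma> reset_chip b b')"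
    using invariant_of_props(3)[OF tT cs] unfolding reset_chip_def by blast
  obtain nb where nb: "\<forall>m\<ge>nb. prefix base (ob m)" using path_extends_base by blast
  obtain v where v: "v \<ge> max K nb" "ob v = base" using recurrent_visited[OF recurrent_base] by blast
  obtain n where n: "n \<ge> v" "ob n = min_bud" using recurrent_visited[OF min_bud_props(1)] by blast
  obtain l where l: "length cs \<le> l" "l \<le> length min_bud" "p = take l min_bud"
    using p(1) by (auto simp: set_path_nodes)
  have "prefix cs min_bud" using bud_props[OF tT cs] by (simp add: strict_prefix_def)
  then have "prefix cs p" using l by (metis prefix_def append_eq_conv_conj take_add le_add_diff_inverse)
  then have "prefix base p"
    using recurrent_extends_base[OF recurrent_companion[OF min_bud_props(1) cs]] prefix_order.order_trans by blast
  moreover have "prefix p (ob n)" using l n by (simp add: take_is_prefix)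
  ultimately obtain r where "v \<le> r" "ob r = p" using path_visits_between[OF v(2) n(1)] n(2) by blast
  then show ?thesis using v p(2) by (intro exI[of _ r]) auto
qed

end

section \<open>Lifting branches of the stripped proof\<close>

text \<open>A branch of strip(Pi) is lifted to an infinite path of Pi: structural nodes are passed through
  via their single child without advancing along the branch.\<close>

primrec lift_branch :: "(nat list \<Rightarrow> nat list option) \<Rightarrow> (nat list \<Rightarrow> ('s, 'c, 'x, 'a, 'r) rrule option) \<Rightarrow>
    (nat \<Rightarrow> nat list) \<Rightarrow> nat \<Rightarrow> nat list \<times> nat" where
  "lift_branch \<beta> \<delta> \<pi> 0 = ([], 0)"
| "lift_branch \<beta> \<delta> \<pi> (Suc n) = (let (t, i) = lift_branch \<beta> \<delta> \<pi> n in
     if \<beta> t \<noteq> None then (the (\<beta> t), Suc i)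
     else if is_struct \<delta> t then (t @ [0], i)
     else (t @ [last (\<pi> (Suc i))], Suc i))"

locale stripped_branch = reset_proof_tree \<alpha> Seq Rl concl prems iobj imor T \<beta> lab \<delta>
  for \<alpha> :: "'a::{finite, bounded_semilattice_sup_bot}"
    and Seq :: "'s set" and Rl :: "'r set"
    and concl :: "'r \<Rightarrow> 's" and prems :: "'r \<Rightarrow> 's list"
    and iobj :: "'s \<Rightarrow> 'x set" and imor :: "'r \<Rightarrow> ('x \<times> 'a \<times> 'x) set list"
    and T :: "nat list set" and \<beta> :: "nat list \<Rightarrow> nat list option"
    and lab :: "nat list \<Rightarrow> 's \<times> ('c, 'x, 'a) board"
    and \<delta> :: "nat list \<Rightarrow> ('s, 'c, 'x, 'a, 'r) rrule option" +
  fixes \<pi> :: "nat \<Rightarrow> nat list"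
  assumes branch_\<pi>: "branch (strip_T T \<delta>) (strip_beta T \<beta> \<delta>) \<pi>"
begin

abbreviation node :: "nat \<Rightarrow> nat list" where "node n \<equiv> fst (lift_branch \<beta> \<delta> \<pi> n)"
abbreviation pos :: "nat \<Rightarrow> nat" where "pos n \<equiv> snd (lift_branch \<beta> \<delta> \<pi> n)"
abbreviation \<tau> :: "nat \<Rightarrow> ('x \<times> 'a \<times> 'x) set" where
  "\<tau> \<equiv> branch_mor (strip_T T \<delta>) (strip_lab T \<delta> lab) (strip_delta T \<delta>) iobj imor \<pi>"

lemma lift_Suc:
  "node (Suc n) = (if \<beta> (node n) \<noteq> None then the (\<beta> (node n))
     else if is_struct \<delta> (node n) then node n @ [0] else node n @ [last (\<pi> (Suc (pos n)))])"
  "pos (Suc n) = (if \<beta> (node n) \<noteq> None \<or> \<not> is_struct \<delta> (node n) then Suc (pos n) else pos n)"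
  by (simp_all add: case_prod_beta)

declare lift_branch.simps(2) [simp del]

lemma branch_step:
  shows "\<pi> i \<in> strip_T T \<delta>"
    and "leaf (strip_T T \<delta>) (\<pi> i) \<Longrightarrow> strip_beta T \<beta> \<delta> (\<pi> i) = Some (\<pi> (Suc i))"
    and "\<not> leaf (strip_T T \<delta>) (\<pi> i) \<Longrightarrow> \<pi> (Suc i) \<in> Chld (strip_T T \<delta>) (\<pi> i)"
  using branch_\<pi> unfolding branch_def by simp_all

lemma branch_child_of_ann:
  assumes "t \<in> NS T \<delta>" and "\<pi> i = naddr \<delta> t" and "\<delta> t = Some (RAnn R b bs)"
  obtains j where "\<pi> (Suc i) = \<pi> i @ [j]" "t @ [j] \<in> T" "strip_delta T \<delta> (\<pi> i) = Some R"
    "\<not> leaf (strip_T T \<delta>) (\<pi> i)"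
proof -
  have sn: "strip_node T \<delta> (\<pi> i) = t" using strip_node_naddr[OF assms(1)] assms(2) by simp
  have "strip_beta T \<beta> \<delta> (\<pi> i) = None"
    using sn assms(3) rule_not_bud[of t] assms(1) branch_step(1) by (simp add: strip_beta_def NS_def)
  then have nl: "\<not> leaf (strip_T T \<delta>) (\<pi> i)" using branch_step(2) by force
  then obtain j where j: "\<pi> (Suc i) = \<pi> i @ [j]" "\<pi> i @ [j] \<in> strip_T T \<delta>"
    using branch_step(3) by (auto simp: Chld_def)
  have "t @ [j] \<in> T" using strip_T_child(2)[OF j(2)] sn by simp
  moreover have "strip_delta T \<delta> (\<pi> i) = Some R" using sn assms(3) branch_step(1) by (simp add: strip_delta_def)
  ultimately show ?thesis using that j nl by blast
qed

lemma lift_invariant: "node n \<in> T \<and> naddr \<delta> (eff \<delta> (node n)) = \<pi> (pos n)"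
proof (induction n)
  case 0
  then show ?case using root_in_T eff_props(3)[OF root_in_T] branch_\<pi> by (simp add: branch_def)
next
  case (Suc n)
  have oT: "node n \<in> T" and iv: "naddr \<delta> (eff \<delta> (node n)) = \<pi> (pos n)" using Suc.IH by auto
  show ?case
    using oT
  proof (cases rule: node_cases)
    case (bud c)
    then have ns: "node n \<in> NS T \<delta>" using oT by (simp add: NS_def is_struct_def)
    then have pi: "\<pi> (pos n) = naddr \<delta> (node n)" using iv eff_nonstruct[of \<delta> "node n"] by (simp add: NS_def)
    have "\<pi> (Suc (pos n)) = naddr \<delta> (eff \<delta> c)"
      using branch_step(2)[of "pos n"] strip_leaf_of_bud[OF ns bud(1)] strip_beta_naddr[OF ns] bud(1) pi
      by simp
    then show ?thesis using bud_props[OF oT bud(1)] bud(1) lift_Suc by simp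
  next
    case struct
    then show ?thesis using eff_struct_child[OF oT struct(1)] struct_step(2)[OF oT struct(1)] iv lift_Suc by simp
  next
    case (ann R b bs)
    then have nst: "\<not> is_struct \<delta> (node n)" by (simp add: is_struct_def is_ann_def)
    then have ns: "node n \<in> NS T \<delta>" and pi: "\<pi> (pos n) = naddr \<delta> (node n)"
      using oT iv eff_nonstruct[OF nst] by (auto simp: NS_def)
    obtain j where j: "\<pi> (Suc (pos n)) = \<pi> (pos n) @ [j]" "node n @ [j] \<in> T"
      by (rule branch_child_of_ann[OF ns pi ann(1)])
    have "naddr \<delta> (eff \<delta> (node n @ [j])) = naddr \<delta> (node n) @ [j]"
      using eff_props(3)[OF j(2)] ann by (simp add: naddr_snoc is_ann_iff)
    then show ?thesis using j pi nst ann(2) lift_Suc by simp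
  qed
qed

lemma node_in_T: "node n \<in> T"
  using lift_invariant by blast

lemma node_NS_naddr: "\<not> is_struct \<delta> (node n) \<Longrightarrow> node n \<in> NS T \<delta> \<and> \<pi> (pos n) = naddr \<delta> (node n)"
  using lift_invariant[of n] eff_nonstruct[of \<delta> "node n"] by (simp add: NS_def)

lemma iobj_node: "iobj (seq_of (node n)) = iobj (strip_lab T \<delta> lab (\<pi> (pos n)))"
  using lift_invariant[of n] strip_lab_naddr[OF eff_in_NS[OF node_in_T[of n]]] eff_props(4)[OF node_in_T[of n]]
  by simp

lemma lift_step_bud:
  assumes "\<beta> (node n) = Some c"
  shows "node (Suc n) = c" and "pos (Suc n) = Suc (pos n)" and "lab (node (Suc n)) = lab (node n)"
    and "\<tau> (pos n) = mid (iobj (seq_of (node n)))"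
proof -
  show "node (Suc n) = c" "pos (Suc n) = Suc (pos n)" using assms lift_Suc by auto
  then show "lab (node (Suc n)) = lab (node n)" using bud_props[OF node_in_T assms] by simp
  have "\<delta> (node n) = None" using bud_props[OF node_in_T assms] by blast
  then have "node n \<in> NS T \<delta> \<and> \<pi> (pos n) = naddr \<delta> (node n)" using node_NS_naddr by (simp add: is_struct_def)
  then have "leaf (strip_T T \<delta>) (\<pi> (pos n))" using strip_leaf_of_bud assms by auto
  then show "\<tau> (pos n) = mid (iobj (seq_of (node n)))" using iobj_node by (simp add: branch_mor_def)
qed

lemma lift_step_struct:
  assumes "is_struct \<delta> (node n)"
  shows "node (Suc n) = node n @ [0]" and "pos (Suc n) = pos n"
  using assms struct_step(1)[OF node_in_T assms] lift_Suc by auto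

lemma lift_step_ann:
  assumes "\<delta> (node n) = Some (RAnn R b bs)"
  obtains j where "j < length (prems R)" "node (Suc n) = node n @ [j]" "pos (Suc n) = Suc (pos n)"
    "\<tau> (pos n) = imor R ! j"
proof -
  have nst: "\<not> is_struct \<delta> (node n)" using assms by (simp add: is_struct_def is_ann_def)
  then have ns: "node n \<in> NS T \<delta>" and pi: "\<pi> (pos n) = naddr \<delta> (node n)" using node_NS_naddr by auto
  obtain j where j: "\<pi> (Suc (pos n)) = \<pi> (pos n) @ [j]" "node n @ [j] \<in> T"
    "strip_delta T \<delta> (\<pi> (pos n)) = Some R" "\<not> leaf (strip_T T \<delta>) (\<pi> (pos n))"
    by (rule branch_child_of_ann[OF ns pi assms])
  have "\<beta> (node n) = None" using ann_step(1)[OF node_in_T assms] .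
  then have "node (Suc n) = node n @ [j]" "pos (Suc n) = Suc (pos n)" using j(1) nst lift_Suc by auto
  moreover have "j < length (prems R)" using ann_step(5)[OF node_in_T assms] j(2) by blast
  moreover have "\<tau> (pos n) = imor R ! j" using j by (simp add: branch_mor_def)
  ultimately show ?thesis using that by blast
qed

lemma lift_path_step:
  "\<beta> (node n) = Some (node (Suc n)) \<or> (\<beta> (node n) = None \<and> (\<exists>j. node (Suc n) = node n @ [j]))"
  using node_in_T[of n]
proof (cases rule: node_cases)
  case (bud c)
  then show ?thesis using lift_step_bud by simp
next
  case struct
  then show ?thesis using lift_step_struct by blast
next
  case (ann R b bs)
  then show ?thesis by (metis lift_step_ann)
qed

lemma pos_mono: "m \<le> n \<Longrightarrow> pos m \<le> pos n"
  by (rule lift_Suc_mono_le[of pos]) (simp add: lift_Suc(2))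

lemma pos_Suc_ann: "is_ann \<delta> (node n) \<Longrightarrow> pos (Suc n) = Suc (pos n)"
  using lift_step_ann unfolding is_ann_iff by metis

end

sublocale stripped_branch \<subseteq> recurrent_path \<alpha> Seq Rl concl prems iobj imor T \<beta> lab \<delta> node
  by unfold_locales (rule node_in_T, rule lift_path_step)

section \<open>The trace condition\<close>

lemma sup_alpha_cases:
  fixes \<alpha> a c v :: "'a::bounded_semilattice_sup_bot"
  assumes "v = a \<or> v = sup \<alpha> a"
  shows "sup v c = sup a c \<or> sup v c = sup \<alpha> (sup a c)" and "sup a c = \<alpha> \<Longrightarrow> sup v c = \<alpha>"
proof -
  show "sup v c = sup a c \<or> sup v c = sup \<alpha> (sup a c)" using assms by (auto simp: sup_assoc)
  then show "sup a c = \<alpha> \<Longrightarrow> sup v c = \<alpha>" by auto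
qed

lemma control_succ_refl: "control_succ \<Theta> \<Theta>"
  unfolding control_succ_def by (intro exI[of _ "\<lambda>_. True"] exI[of _ "[]"]) simp

lemma mcomp_mem: "(x, a, y) \<in> R \<Longrightarrow> (y, b, z) \<in> R' \<Longrightarrow> (x, sup a b, z) \<in> mcomp R' R"
  by (auto simp: mcomp_def)

context stripped_branch
begin

definition stack_step :: "nat \<Rightarrow> 'x \<times> 'a \<times> 'c set \<Rightarrow> 'x \<times> 'a \<times> 'c set \<Rightarrow> bool" where
  "stack_step n s s' \<longleftrightarrow> (case s of (x, a, S) \<Rightarrow> case s' of (x', a', S') \<Rightarrow>
     (if is_ann \<delta> (node n) then (\<exists>c. (x, c, x') \<in> \<tau> (pos n) \<and>
          ((a' = sup a c \<and> S' = S) \<or> (sup a c = \<alpha> \<and> a' = bot \<and> (\<exists>z. S' = insert z S))))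
      else (x' = x \<and> a' = a \<and> S' \<subseteq> S)))"

lemma control_step: "control_succ (ctrl_of (node n)) (ctrl_of (node (Suc n)))"
  using node_in_T[of n]
proof (cases rule: node_cases)
  case (bud c)
  then show ?thesis using lift_step_bud(3)[OF bud(1)] control_succ_refl by simp
next
  case struct
  then show ?thesis using struct_step(4)[OF node_in_T] lift_step_struct(1) by simp
next
  case (ann R b bs)
  obtain j where j: "j < length (prems R)" "node (Suc n) = node n @ [j]" "pos (Suc n) = Suc (pos n)"
    "\<tau> (pos n) = imor R ! j"
    by (rule lift_step_ann[OF ann(1)])
  have "lab (node n) = (concl R, b)" "lab (node n @ [j]) = (prems R ! j, bs ! j)"
    "mor_succ \<alpha> (imor R ! j) b (bs ! j)"
    using ann_step(3)[OF node_in_T ann(1)] ann_step(6)[OF node_in_T ann(1) j(1)] by auto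
  then show ?thesis using control_succ_mor[of \<alpha> "imor R ! j" b "bs ! j"] j(2) by simp
qed

lemma stack_step_backward:
  assumes "\<gamma> \<in> set (ctrl_of (node n))" and "S' \<in> snd (board_of (node (Suc n))) x' a'" and "\<gamma> \<in> S'"
  shows "\<exists>x a S. S \<in> snd (board_of (node n)) x a \<and> \<gamma> \<in> S \<and> stack_step n (x, a, S) (x', a', S')"
  using node_in_T[of n]
proof (cases rule: node_cases)
  case (bud c)
  then have "S' \<in> snd (board_of (node n)) x' a'" "\<not> is_ann \<delta> (node n)"
    using assms(2) lift_step_bud(3)[OF bud(1)] by (auto simp: is_ann_def)
  then show ?thesis using assms(3) unfolding stack_step_def
    by (intro exI[of _ x'] exI[of _ a'] exI[of _ S']) simp
next
  case struct
  then have "board_dominated (board_of (node (Suc n))) (board_of (node n))"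
    using struct_step(5)[OF node_in_T] lift_step_struct(1) by simp
  then obtain S where "S \<in> snd (board_of (node n)) x' a'" "S' \<subseteq> S"
    using assms(2,3) unfolding board_dominated_def by blast
  then show ?thesis using assms(3) is_struct_not_ann[OF struct(1)] unfolding stack_step_def
    by (intro exI[of _ x'] exI[of _ a'] exI[of _ S]) auto
next
  case (ann R b bs)
  obtain j where j: "j < length (prems R)" "node (Suc n) = node n @ [j]" "pos (Suc n) = Suc (pos n)"
    "\<tau> (pos n) = imor R ! j"
    by (rule lift_step_ann[OF ann(1)])
  have l: "lab (node n) = (concl R, b)" "lab (node n @ [j]) = (prems R ! j, bs ! j)"
    "mor_succ \<alpha> (imor R ! j) b (bs ! j)"
    using ann_step(3)[OF node_in_T ann(1)] ann_step(6)[OF node_in_T ann(1) j(1)] by auto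
  have ia: "is_ann \<delta> (node n)" using ann(1) by (simp add: is_ann_iff)
  have sb: "S' \<in> snd (bs ! j) x' a'" using assms(2) j(2) l(2) by simp
  have gb: "\<gamma> \<in> set (fst b)" using assms(1) l(1) by simp
  obtain x a S c where "S \<in> snd b x a" "\<gamma> \<in> S" "(x, c, x') \<in> imor R ! j"
    "(a' = sup a c \<and> S' = S) \<or> (sup a c = \<alpha> \<and> a' = bot \<and> (\<exists>z. S' = insert z S))"
    using mor_succ_stack_origin[OF l(3) sb assms(3) gb] by blast
  then show ?thesis using l j ia unfolding stack_step_def
    by (intro exI[of _ x] exI[of _ a] exI[of _ S]) auto
qed

lemma chip_lineage_exists:
  assumes "\<forall>n\<ge>n1. \<gamma> \<in> set (ctrl_of (node n))"
  shows "\<exists>f. \<forall>n\<ge>n1. f n \<in> {(x, a, S). S \<in> snd (board_of (node n)) x a \<and> \<gamma> \<in> S} \<and> stack_step n (f n) (f (Suc n))"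
proof (rule koenig_layered_path[of n1 "\<lambda>n. {(x, a, S). S \<in> snd (board_of (node n)) x a \<and> \<gamma> \<in> S}"
      stack_step])
  fix n assume n: "n1 \<le> n"
  have wf: "board_on (iobj (seq_of (node n))) (board_of (node n))" using lab_well_formed[OF node_in_T] by blast
  have "{(x, a, S). S \<in> snd (board_of (node n)) x a \<and> \<gamma> \<in> S} \<subseteq>
      iobj (seq_of (node n)) \<times> UNIV \<times> Pow (set (ctrl_of (node n)))"
    using board_on_stack[OF wf] by blast
  moreover have "finite (iobj (seq_of (node n)) \<times> (UNIV :: 'a set) \<times> Pow (set (ctrl_of (node n))))"
    using finite_iobj[OF node_in_T] by simp
  ultimately show "finite {(x, a, S). S \<in> snd (board_of (node n)) x a \<and> \<gamma> \<in> S}"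
    using finite_subset by blast
  obtain x a S where "S \<in> snd (board_of (node n)) x a" "\<gamma> \<in> S"
    using board_on_chip[OF wf] assms n by blast
  then show "{(x, a, S). S \<in> snd (board_of (node n)) x a \<and> \<gamma> \<in> S} \<noteq> {}" by blast
next
  fix n y assume n: "n1 \<le> n" and "y \<in> {(x, a, S). S \<in> snd (board_of (node (Suc n))) x a \<and> \<gamma> \<in> S}"
  then obtain x' a' S' where "y = (x', a', S')" "S' \<in> snd (board_of (node (Suc n))) x' a'" "\<gamma> \<in> S'" by blast
  then show "\<exists>x\<in>{(x, a, S). S \<in> snd (board_of (node n)) x a \<and> \<gamma> \<in> S}. stack_step n x y"
    using stack_step_backward[of \<gamma> n S' x' a'] assms n by blast
qed

end

locale chip_lineage = stripped_branch \<alpha> Seq Rl concl prems iobj imor T \<beta> lab \<delta> \<pi>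
  for \<alpha> :: "'a::{finite, bounded_semilattice_sup_bot}"
    and Seq :: "'s set" and Rl :: "'r set"
    and concl :: "'r \<Rightarrow> 's" and prems :: "'r \<Rightarrow> 's list"
    and iobj :: "'s \<Rightarrow> 'x set" and imor :: "'r \<Rightarrow> ('x \<times> 'a \<times> 'x) set list"
    and T :: "nat list set" and \<beta> :: "nat list \<Rightarrow> nat list option"
    and lab :: "nat list \<Rightarrow> 's \<times> ('c, 'x, 'a) board"
    and \<delta> :: "nat list \<Rightarrow> ('s, 'c, 'x, 'a, 'r) rrule option"
    and \<pi> :: "nat \<Rightarrow> nat list" +
  fixes n1 :: nat and xs :: "nat \<Rightarrow> 'x" and as :: "nat \<Rightarrow> 'a" and Ss :: "nat \<Rightarrow> 'c set"
  assumes chip_in_control: "n \<ge> n1 \<Longrightarrow> reset_chip \<in> set (ctrl_of (node n))"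
    and stack_on_board: "n \<ge> n1 \<Longrightarrow> Ss n \<in> snd (board_of (node n)) (xs n) (as n)"
    and chip_in_stack: "n \<ge> n1 \<Longrightarrow> reset_chip \<in> Ss n"
    and lineage_step: "n \<ge> n1 \<Longrightarrow> stack_step n (xs n, as n, Ss n) (xs (Suc n), as (Suc n), Ss (Suc n))"
begin

lemma xs_in_iobj: "n \<ge> n1 \<Longrightarrow> xs n \<in> iobj (seq_of (node n))"
  using board_on_stack[OF conjunct2[OF lab_well_formed[OF node_in_T]] stack_on_board] by blast

definition alpha_step :: "nat \<Rightarrow> bool" where
  "alpha_step e \<longleftrightarrow> e \<ge> n1 \<and> is_ann \<delta> (node e) \<and>
     (\<exists>c. (xs e, c, xs (Suc e)) \<in> \<tau> (pos e) \<and> sup (as e) c = \<alpha> \<and> as (Suc e) = bot)"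

lemma stack_shrinks: "n \<ge> n1 \<Longrightarrow> \<not> alpha_step n \<Longrightarrow> Ss (Suc n) \<subseteq> Ss n"
  using lineage_step[of n] unfolding stack_step_def alpha_step_def by (auto split: if_splits)

lemma stack_below_reset_chip:
  assumes "r \<ge> n1" and "\<delta> (node r) = Some (RReset \<Gamma> reset_chip b b')"
    and "\<forall>e. Suc r \<le> e \<and> e < k \<longrightarrow> \<not> alpha_step e" and "Suc r \<le> k"
  shows "z \<in> Ss k \<Longrightarrow> cle (ctrl_of (node k)) z reset_chip"
  using assms(4,3)
proof (induction k arbitrary: z rule: dec_induct)
  case base
  have r: "lab (node r) = (\<Gamma>, b)" "lab (node r @ [0]) = (\<Gamma>, b')" "reset_succ reset_chip b b'"
    using reset_step[OF node_in_T assms(2)] by auto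
  have "node (Suc r) = node r @ [0]"
    using lift_step_struct(1) assms(2) by (simp add: is_struct_def is_ann_def)
  then have "Ss (Suc r) \<in> snd b' (xs (Suc r)) (as (Suc r))" "reset_chip \<in> Ss (Suc r)"
    using stack_on_board[of "Suc r"] chip_in_stack[of "Suc r"] assms(1) r(2) by auto
  then have "cle (ctrl_of (node r)) z reset_chip"
    using reset_succ_truncates[OF r(3)] base.prems(1) r(1) by fastforce
  moreover have "z \<in> set (ctrl_of (node (Suc r)))"
    using board_on_stack[OF conjunct2[OF lab_well_formed[OF node_in_T]] stack_on_board] base.prems(1) assms(1)
    by (meson le_SucI subsetD)
  ultimately show ?case using cle_control_succ[OF control_step] chip_in_control assms(1) by simp
next
  case (step k)
  have k: "k \<ge> n1" "\<not> alpha_step k" using step.hyps step.prems(2) assms(1) by auto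
  have "z \<in> Ss k" using stack_shrinks[OF k] step.prems(1) by blast
  then have "cle (ctrl_of (node k)) z reset_chip" using step.IH step.prems(2) by simp
  moreover have "z \<in> set (ctrl_of (node (Suc k)))"
    using board_on_stack[OF conjunct2[OF lab_well_formed[OF node_in_T]] stack_on_board] step.prems(1) k(1)
    by (meson le_SucI subsetD)
  ultimately show ?case using cle_control_succ[OF control_step] chip_in_control k(1) by simp
qed

lemma alpha_steps_unbounded: "\<exists>e\<ge>K. alpha_step e"
proof (rule ccontr)
  assume none: "\<not> (\<exists>e\<ge>K. alpha_step e)"
  obtain r \<Gamma> b b' where r: "r \<ge> max K n1" "\<delta> (node r) = Some (RReset \<Gamma> reset_chip b b')"
    using reset_chip_reset_infinitely by blast
  obtain r' \<Gamma>' c c' where r': "r' \<ge> Suc r" "\<delta> (node r') = Some (RReset \<Gamma>' reset_chip c c')"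
    using reset_chip_reset_infinitely by blast
  have below: "\<forall>z\<in>Ss r'. cle (ctrl_of (node r')) z reset_chip"
    using stack_below_reset_chip[of r \<Gamma> b b' r'] r r' none by auto
  have "lab (node r') = (\<Gamma>', c)" "reset_succ reset_chip c c'" using reset_step[OF node_in_T r'(2)] by auto
  then show False
    using reset_succ_covered below stack_on_board[of r'] chip_in_stack[of r'] r r' by fastforce
qed

lemma lineage_segment_step:
  assumes "m \<le> n" and n: "n \<ge> n1"
    and v: "(xs m, v, xs n) \<in> seg \<tau> (iobj (seq_of (node m))) (pos m) (pos n - pos m)"
      "v = as n \<or> v = sup \<alpha> (as n)"
  shows "\<exists>v'. (xs m, v', xs (Suc n)) \<in> seg \<tau> (iobj (seq_of (node m))) (pos m) (pos (Suc n) - pos m) \<and>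
    (v' = as (Suc n) \<or> v' = sup \<alpha> (as (Suc n)))"
proof -
  have im: "pos m \<le> pos n" using pos_mono assms(1) by simp
  have seg_Suc: "seg \<tau> (iobj (seq_of (node m))) (pos m) (Suc (pos n - pos m)) =
      mcomp (\<tau> (pos n)) (seg \<tau> (iobj (seq_of (node m))) (pos m) (pos n - pos m))"
    using im by simp
  show ?thesis
  proof (cases "is_ann \<delta> (node n)")
    case True
    obtain c where c: "(xs n, c, xs (Suc n)) \<in> \<tau> (pos n)"
      "(as (Suc n) = sup (as n) c) \<or> (sup (as n) c = \<alpha> \<and> as (Suc n) = bot)"
      using lineage_step[OF n] True unfolding stack_step_def by auto
    have "(xs m, sup v c, xs (Suc n)) \<in> seg \<tau> (iobj (seq_of (node m))) (pos m) (pos (Suc n) - pos m)"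
      using mcomp_mem[OF v(1) c(1)] seg_Suc pos_Suc_ann[OF True] im by (simp add: Suc_diff_le)
    moreover have "sup v c = as (Suc n) \<or> sup v c = sup \<alpha> (as (Suc n))"
      using c(2) sup_alpha_cases[OF v(2), of c] by auto
    ultimately show ?thesis by blast
  next
    case False
    then have same: "xs (Suc n) = xs n" "as (Suc n) = as n"
      using lineage_step[OF n] unfolding stack_step_def by auto
    show ?thesis
    proof (cases "\<beta> (node n)")
      case None
      then have "is_struct \<delta> (node n)"
        using False reset_assumption_free node_in_T unfolding assumption_free_def is_struct_def by blast
      then show ?thesis using lift_step_struct(2) same v by auto
    next
      case (Some c)
      have "(xs n, bot, xs n) \<in> \<tau> (pos n)"
        using lift_step_bud(4)[OF Some] xs_in_iobj[OF n] by (simp add: mid_def)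
      then have "(xs m, sup v bot, xs n) \<in> mcomp (\<tau> (pos n)) (seg \<tau> (iobj (seq_of (node m))) (pos m) (pos n - pos m))"
        by (rule mcomp_mem[OF v(1)])
      then have "(xs m, v, xs (Suc n)) \<in> seg \<tau> (iobj (seq_of (node m))) (pos m) (pos (Suc n) - pos m)"
        using seg_Suc lift_step_bud(2)[OF Some] im same by (simp add: Suc_diff_le)
      then show ?thesis using v(2) same by auto
    qed
  qed
qed

lemma lineage_segment:
  assumes "m \<ge> n1" and "as m = bot" and "m \<le> n"
  shows "\<exists>v. (xs m, v, xs n) \<in> seg \<tau> (iobj (seq_of (node m))) (pos m) (pos n - pos m) \<and>
    (v = as n \<or> v = sup \<alpha> (as n))"
  using assms(3)
proof (induction n rule: dec_induct)
  case base
  then show ?case using xs_in_iobj[OF assms(1)] assms(2) by (intro exI[of _ bot]) (simp add: mid_def)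
next
  case (step n)
  then obtain v where "(xs m, v, xs n) \<in> seg \<tau> (iobj (seq_of (node m))) (pos m) (pos n - pos m)"
    "v = as n \<or> v = sup \<alpha> (as n)" by blast
  moreover have "n \<ge> n1" using assms(1) step.hyps(1) by simp
  ultimately show ?case using lineage_segment_step[OF step.hyps(1)] by blast
qed

lemma lineage_trace: "trace_cond \<alpha> (\<lambda>i. iobj (strip_lab T \<delta> lab (\<pi> i))) \<tau>"
proof -
  define E where "E = enumerate {e. alpha_step e}"
  have inf: "infinite {e. alpha_step e}"
    using alpha_steps_unbounded unfolding infinite_nat_iff_unbounded_le by blast
  have E: "alpha_step (E j)" "E j < E (Suc j)" for j
    using enumerate_in_set[OF inf] strict_mono_enumerate[OF inf] unfolding E_def strict_mono_def by auto
  define k where "k j = pos (Suc (E j))" for j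
  define s where "s j = xs (Suc (E j))" for j
  have "strict_mono k"
    unfolding strict_mono_Suc_iff k_def
    using pos_mono E pos_Suc_ann unfolding alpha_step_def by (metis Suc_leI le_imp_less_Suc)
  moreover have "s j \<in> iobj (strip_lab T \<delta> lab (\<pi> (k j)))" for j
    using xs_in_iobj[of "Suc (E j)"] iobj_node[of "Suc (E j)"] E(1)[of j]
    unfolding s_def k_def alpha_step_def by simp
  moreover have "(s j, \<alpha>, s (Suc j)) \<in> seg \<tau> (iobj (strip_lab T \<delta> lab (\<pi> (k j)))) (k j) (k (Suc j) - k j)" for j
  proof -
    define m n where "m = Suc (E j)" and "n = E (Suc j)"
    have m: "m \<ge> n1" "as m = bot" "m \<le> n" using E[of j] unfolding m_def n_def alpha_step_def by auto
    obtain v where v: "(xs m, v, xs n) \<in> seg \<tau> (iobj (seq_of (node m))) (pos m) (pos n - pos m)"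
      "v = as n \<or> v = sup \<alpha> (as n)"
      using lineage_segment[OF m] by blast
    obtain c where c: "(xs n, c, xs (Suc n)) \<in> \<tau> (pos n)" "sup (as n) c = \<alpha>" "is_ann \<delta> (node n)"
      using E(1)[of "Suc j"] unfolding n_def alpha_step_def by blast
    have "(xs m, sup v c, xs (Suc n)) \<in> seg \<tau> (iobj (seq_of (node m))) (pos m) (pos (Suc n) - pos m)"
      using mcomp_mem[OF v(1) c(1)] pos_Suc_ann[OF c(3)] pos_mono[OF m(3)] by (simp add: Suc_diff_le)
    then show ?thesis
      using sup_alpha_cases(2)[OF v(2) c(2)] iobj_node unfolding s_def k_def m_def n_def by simp
  qed
  ultimately show ?thesis unfolding trace_cond_def by blast
qed

end

context stripped_branch
begin

lemma branch_trace: "trace_cond \<alpha> (\<lambda>i. iobj (strip_lab T \<delta> lab (\<pi> i))) \<tau>"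
proof -
  obtain n1 where n1: "\<forall>n\<ge>n1. reset_chip \<in> set (ctrl_of (node n))"
    using reset_chip_eventually_in_control by blast
  obtain f where f: "\<forall>n\<ge>n1. f n \<in> {(x, a, S). S \<in> snd (board_of (node n)) x a \<and> reset_chip \<in> S} \<and>
      stack_step n (f n) (f (Suc n))"
    using chip_lineage_exists[OF n1] by blast
  interpret chip_lineage \<alpha> Seq Rl concl prems iobj imor T \<beta> lab \<delta> \<pi> n1
      "\<lambda>n. fst (f n)" "\<lambda>n. fst (snd (f n))" "\<lambda>n. snd (snd (f n))"
    using n1 f by unfold_locales (auto simp: case_prod_beta)
  show ?thesis by (rule lineage_trace)
qed

end

theorem mainTheorem9:
  fixes \<alpha> :: "'a::{finite, bounded_semilattice_sup_bot}"
    and Seq :: "'s set" and Rl :: "'r set"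
    and concl :: "'r \<Rightarrow> 's" and prems :: "'r \<Rightarrow> 's list"
    and iobj :: "'s \<Rightarrow> 'x set" and imor :: "'r \<Rightarrow> ('x \<times> 'a \<times> 'x) set list"
    and T :: "nat list set" and \<beta> :: "nat list \<Rightarrow> nat list option"
    and lab :: "nat list \<Rightarrow> 's \<times> ('c::countable, 'x, 'a) board"
    and \<delta> :: "nat list \<Rightarrow> ('s, 'c, 'x, 'a, 'r) rrule option"
  assumes "\<alpha> \<noteq> bot"
    and "infinite (UNIV :: 'c set)"
    and "derivation_system Seq Rl concl prems"
    and "trace_interp Seq Rl concl prems iobj imor"
    and "reset_proof \<alpha> Seq Rl concl prems iobj imor T \<beta> lab \<delta>"
  shows "iota_proof \<alpha> Seq Rl concl prems iobj imor
           (strip_T T \<delta>) (strip_beta T \<beta> \<delta>) (strip_lab T \<delta> lab) (strip_delta T \<delta>)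
         \<and> strip_lab T \<delta> lab [] = fst (lab [])"
proof -
  interpret reset_proof_tree \<alpha> Seq Rl concl prems iobj imor T \<beta> lab \<delta>
    using assms(4,5) by unfold_locales
  have "trace_cond \<alpha> (\<lambda>i. iobj (strip_lab T \<delta> lab (\<pi> i)))
      (branch_mor (strip_T T \<delta>) (strip_lab T \<delta> lab) (strip_delta T \<delta>) iobj imor \<pi>)"
    if "branch (strip_T T \<delta>) (strip_beta T \<beta> \<delta>) \<pi>" for \<pi>
  proof -
    interpret stripped_branch \<alpha> Seq Rl concl prems iobj imor T \<beta> lab \<delta> \<pi>
      using that by unfold_locales
    show ?thesis by (rule branch_trace)
  qed
  then show ?thesis
    unfolding iota_proof_def using strip_preproof strip_assumption_free strip_lab_root by blast
qed

end
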